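(* Let $w\in S_N$, $i\in[N-1]$, $s=s_i=(i,i+1)$, and let $\tau=wsw^{-1}$ (the transposition of $w(i)$ and $w(i+1)$). Then for all $\lambda,\mu\in\Lambda_n$, $$S^{ws}_\lambda(\mu)=\begin{cases}S^w_{\tau\lambda}(\mu)+(t_{w(i+1)}-t_{w(i)})S^w_\lambda(\mu)&\text{if }\lambda_{w(i+1)}>\lambda_{w(i)},\\ S^w_{\tau\lambda}(\mu)&\text{otherwise.}\end{cases}$$ In particular, for fixed $w\in S_N$, the classes $\{S^w_\lambda\}_{\lambda\in\Lambda_n}$ form a ${\bf P}$-basis of $H_T^*(X_n)$.
   Context: ${\bf P}=\mathbb{C}[t_1,\dots,t_N]$; $\Lambda_n=\{\lambda\in\{0,1\}^N:\sum\lambda_i=n\}$. $S_N$ acts on $\{0,1\}^N$ by $(w\lambda)_j=\lambda_{w^{-1}(j)}$ and on ${\bf P}$ by $w(t_i)=t_{w(i)}$. Let $\operatorname{Func}_n$ be the set of maps $\Lambda_n\to{\bf P}$. An $\alpha\in\operatorname{Func}_n$ is a GKM class if $\alpha(\lambda)-\alpha(s_{ab}\lambda)$ is divisible by $t_a-t_b$ for every $\lambda$ and every transposition $s_{ab}$; $H_T^*(X_n)$ denotes the ${\bf P}$-module (ring) of GKM classes (the $T$-equivariant cohomology of $\operatorname{Gr}(n,N)$ via restriction to fixed points). $\operatorname{Supp}(\alpha)=\{\lambda:\alpha(\lambda)\ne0\}$. Let $\ell(\lambda)=\#\{(a,b):a<b,\lambda_a>\lambda_b\}$. Write $\mu\ge\lambda$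 if $\sum_{a\le j}\mu_a\ge\sum_{a\le j}\lambda_a$ for all $j$, and $\mu\ge_w\lambda$ if $w^{-1}\mu\ge w^{-1}\lambda$. Let $\operatorname{inv}_w(\lambda)=\{(a,b):w^{-1}(a)<w^{-1}(b),\ \lambda_a>\lambda_b\}$. The $w$-twisted Schubert class $S^w_\lambda$ is the unique GKM class such that (Stab1) $\lambda\in\operatorname{Supp}(S^w_\lambda)\subseteq\{\mu:\mu\ge_w\lambda\}$; (Stab2) $S^w_\lambda(\lambda)=\prod_{(a,b)\in\operatorname{inv}_w(\lambda)}(t_a-t_b)$; (Stab3) for all $\mu\ge_w\lambda$, $S^w_\lambda(\mu)$ is homogeneous of degree $\ell(w^{-1}\lambda)$ (zero allowed). *)

theory Defs
  imports "HOL-Library.Poly_Mapping" "HOL-Combinatorics.Combinatorics" Complex_Main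
begin

text \<open>Polynomials in variables t_a (a :: nat) with complex coefficients:
  a polynomial is a finitely supported map from monomials (finitely supported
  exponent vectors) to coefficients.  The ring P = C[t_1,...,t_N] is the
  subset Pring N of polynomials only involving the variables t_1..t_N.\<close>

type_synonym mpoly = "(nat \<Rightarrow>\<^sub>0 nat) \<Rightarrow>\<^sub>0 complex"

definition tvar :: "nat \<Rightarrow> mpoly" where
  "tvar a = Poly_Mapping.single (Poly_Mapping.single a 1) 1"

definition Pring :: "nat \<Rightarrow> mpoly set" where
  "Pring N = {p. \<forall>m \<in> Poly_Mapping.keys p. Poly_Mapping.keys m \<subseteq> {1..N}}"

definition homogeneous :: "nat \<Rightarrow> mpoly \<Rightarrow> bool" where
  "homogeneous d p \<longleftrightarrow> (\<forall>m \<in> Poly_Mapping.keys p. (\<Sum>k\<in>Poly_Mapping.keys m. Poly_Mapping.lookup m k) = d)"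

definition Lambda :: "nat \<Rightarrow> nat \<Rightarrow> (nat \<Rightarrow> nat) set" where
  "Lambda N n = {lam. (\<forall>j\<in>{1..N}. lam j \<le> 1) \<and> (\<forall>j. j \<notin> {1..N} \<longrightarrow> lam j = 0)
                    \<and> (\<Sum>j\<in>{1..N}. lam j) = n}"

definition act :: "(nat \<Rightarrow> nat) \<Rightarrow> (nat \<Rightarrow> nat) \<Rightarrow> (nat \<Rightarrow> nat)" where
  "act w lam = (\<lambda>j. lam (inv w j))"

definition GKM :: "nat \<Rightarrow> nat \<Rightarrow> ((nat \<Rightarrow> nat) \<Rightarrow> mpoly) set" where
  "GKM N n = {\<alpha>. (\<forall>lam. lam \<notin> Lambda N n \<longrightarrow> \<alpha> lam = 0)
      \<and> (\<forall>lam \<in> Lambda N n. \<alpha> lam \<in> Pring N)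
      \<and> (\<forall>lam \<in> Lambda N n. \<forall>a\<in>{1..N}. \<forall>b\<in>{1..N}. a \<noteq> b \<longrightarrow>
            (tvar a - tvar b) dvd (\<alpha> lam - \<alpha> (act (transpose a b) lam)))}"

definition len :: "nat \<Rightarrow> (nat \<Rightarrow> nat) \<Rightarrow> nat" where
  "len N lam = card {(a, b). a \<in> {1..N} \<and> b \<in> {1..N} \<and> a < b \<and> lam a > lam b}"

definition dom_ge :: "nat \<Rightarrow> (nat \<Rightarrow> nat) \<Rightarrow> (nat \<Rightarrow> nat) \<Rightarrow> bool" where
  "dom_ge N mu lam \<longleftrightarrow> (\<forall>j\<in>{1..N}. (\<Sum>a\<in>{1..j}. mu a) \<ge> (\<Sum>a\<in>{1..j}. lam a))"

definition dom_ge_w :: "nat \<Rightarrow> (nat \<Rightarrow> nat) \<Rightarrow> (nat \<Rightarrow> nat) \<Rightarrow> (nat \<Rightarrow> nat) \<Rightarrow> bool" where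
  "dom_ge_w N w mu lam \<longleftrightarrow> dom_ge N (act (inv w) mu) (act (inv w) lam)"

definition inv_w :: "nat \<Rightarrow> (nat \<Rightarrow> nat) \<Rightarrow> (nat \<Rightarrow> nat) \<Rightarrow> (nat \<times> nat) set" where
  "inv_w N w lam = {(a, b). a \<in> {1..N} \<and> b \<in> {1..N} \<and> inv w a < inv w b \<and> lam a > lam b}"

definition is_twisted_schubert ::
  "nat \<Rightarrow> nat \<Rightarrow> (nat \<Rightarrow> nat) \<Rightarrow> (nat \<Rightarrow> nat) \<Rightarrow> ((nat \<Rightarrow> nat) \<Rightarrow> mpoly) \<Rightarrow> bool" where
  "is_twisted_schubert N n w lam \<alpha> \<longleftrightarrow>
     \<alpha> \<in> GKM N n
   \<and> \<alpha> lam \<noteq> 0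
   \<and> (\<forall>mu \<in> Lambda N n. \<alpha> mu \<noteq> 0 \<longrightarrow> dom_ge_w N w mu lam)
   \<and> \<alpha> lam = (\<Prod>(a, b)\<in>inv_w N w lam. tvar a - tvar b)
   \<and> (\<forall>mu \<in> Lambda N n. dom_ge_w N w mu lam \<longrightarrow>
         homogeneous (len N (act (inv w) lam)) (\<alpha> mu))"

definition twisted_schubert ::
  "nat \<Rightarrow> nat \<Rightarrow> (nat \<Rightarrow> nat) \<Rightarrow> (nat \<Rightarrow> nat) \<Rightarrow> ((nat \<Rightarrow> nat) \<Rightarrow> mpoly)" where
  "twisted_schubert N n w lam = (THE \<alpha>. is_twisted_schubert N n w lam \<alpha>)"

end

(*
  The twisted classes are twists of the untwisted ones: S^v_theta(mu) is obtained from
  S^id_(theta o v)(mu o v) by renaming t_a to t_(v a).  The untwisted classes are built by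
  induction on the length, starting from the top element 1..10..0, with the divided difference
    d_i alpha (mu) = (alpha mu - s_i (alpha (mu s_i))) / (t_i - t_(i+1)),
  which sends S^id_kappa to S^id_(kappa s_i) when kappa has a descent at i and to 0 otherwise.

  Uniqueness, the vanishing of d_i at non-descents and the triangularity behind the basis all
  rest on one vanishing lemma: a GKM class that is homogeneous of degree d and supported where
  the length exceeds d is zero.  Indeed, at a point of minimal length in the support the GKM
  conditions make the class divisible by the product of the roots t_a - t_b over the
  inversions, a polynomial of degree equal to that length.

  Solving the definition of d_i for s_i (S^id_(nu s_i)(x s_i)) and renaming along w gives the
  recursion for S^(w s_i).
*)

theory Submission
  imports Defs
begin

section \<open>Substitution into polynomials\<close>

definition poly_const :: "complex \<Rightarrow> mpoly" where "poly_const c = Poly_Mapping.single 0 c"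

definition monom_eval :: "(nat \<Rightarrow> mpoly) \<Rightarrow> (nat \<Rightarrow>\<^sub>0 nat) \<Rightarrow> mpoly" where
  "monom_eval \<sigma> m = (\<Prod>k\<in>Poly_Mapping.keys m. \<sigma> k ^ Poly_Mapping.lookup m k)"

definition poly_subst :: "(nat \<Rightarrow> mpoly) \<Rightarrow> mpoly \<Rightarrow> mpoly" where
  "poly_subst \<sigma> p = (\<Sum>m\<in>Poly_Mapping.keys p. poly_const (Poly_Mapping.lookup p m) * monom_eval \<sigma> m)"

lemma poly_const_0[simp]: "poly_const 0 = 0" by (simp add: poly_const_def)
lemma poly_const_1[simp]: "poly_const 1 = 1" by (simp add: poly_const_def)
lemma poly_const_add: "poly_const (a + b) = poly_const a + poly_const b" by (simp add: poly_const_def single_add)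
lemma poly_const_mult: "poly_const (a * b) = poly_const a * poly_const b" by (simp add: poly_const_def mult_single)

lemma monom_eval_superset:
  assumes "finite A" "Poly_Mapping.keys m \<subseteq> A"
  shows "monom_eval \<sigma> m = (\<Prod>k\<in>A. \<sigma> k ^ Poly_Mapping.lookup m k)"
  unfolding monom_eval_def
  by (rule prod.mono_neutral_left) (use assms in \<open>auto simp: in_keys_iff\<close>)

lemma monom_eval_0[simp]: "monom_eval \<sigma> 0 = 1" by (simp add: monom_eval_def)

lemma monom_eval_add: "monom_eval \<sigma> (m + m') = monom_eval \<sigma> m * monom_eval \<sigma> m'"
proof -
  define A where "A = Poly_Mapping.keys m \<union> Poly_Mapping.keys m'"
  have fA: "finite A" by (simp add: A_def)
  have k: "Poly_Mapping.keys (m + m') \<subseteq> A" using keys_add[of m m'] by (auto simp: A_def)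
  have e1: "monom_eval \<sigma> m = (\<Prod>k\<in>A. \<sigma> k ^ Poly_Mapping.lookup m k)" by (rule monom_eval_superset[OF fA]) (auto simp: A_def)
  have e2: "monom_eval \<sigma> m' = (\<Prod>k\<in>A. \<sigma> k ^ Poly_Mapping.lookup m' k)" by (rule monom_eval_superset[OF fA]) (auto simp: A_def)
  show ?thesis
    unfolding monom_eval_superset[OF fA k] e1 e2
    by (auto simp: lookup_add power_add prod.distrib)
qed

lemma poly_subst_superset:
  assumes "finite A" "Poly_Mapping.keys p \<subseteq> A"
  shows "poly_subst \<sigma> p = (\<Sum>m\<in>A. poly_const (Poly_Mapping.lookup p m) * monom_eval \<sigma> m)"
  unfolding poly_subst_def
  by (rule sum.mono_neutral_left) (use assms in \<open>auto simp: in_keys_iff\<close>)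

lemma poly_subst_0[simp]: "poly_subst \<sigma> 0 = 0" by (simp add: poly_subst_def)

lemma poly_subst_add: "poly_subst \<sigma> (p + q) = poly_subst \<sigma> p + poly_subst \<sigma> q"
proof -
  define A where "A = Poly_Mapping.keys p \<union> Poly_Mapping.keys q"
  have fA: "finite A" by (simp add: A_def)
  have k: "Poly_Mapping.keys (p + q) \<subseteq> A" using keys_add[of p q] by (auto simp: A_def)
  have e1: "poly_subst \<sigma> p = (\<Sum>m\<in>A. poly_const (Poly_Mapping.lookup p m) * monom_eval \<sigma> m)" by (rule poly_subst_superset[OF fA]) (auto simp: A_def)
  have e2: "poly_subst \<sigma> q = (\<Sum>m\<in>A. poly_const (Poly_Mapping.lookup q m) * monom_eval \<sigma> m)" by (rule poly_subst_superset[OF fA]) (auto simp: A_def)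
  show ?thesis
    unfolding poly_subst_superset[OF fA k] e1 e2
    by (auto simp: lookup_add poly_const_add distrib_right sum.distrib)
qed

lemma poly_subst_sum: "poly_subst \<sigma> (sum f A) = (\<Sum>x\<in>A. poly_subst \<sigma> (f x))"
  by (induction A rule: infinite_finite_induct) (auto simp: poly_subst_add)

lemma poly_subst_single: "poly_subst \<sigma> (Poly_Mapping.single m c) = poly_const c * monom_eval \<sigma> m"
  by (cases "c = 0") (auto simp: poly_subst_def)

lemma poly_mapping_expand: "(p::'a \<Rightarrow>\<^sub>0 'b::comm_monoid_add) = (\<Sum>m\<in>Poly_Mapping.keys p. Poly_Mapping.single m (Poly_Mapping.lookup p m))"
proof (rule poly_mapping_eqI)
  fix k
  show "Poly_Mapping.lookup p k = Poly_Mapping.lookup (\<Sum>m\<in>Poly_Mapping.keys p. Poly_Mapping.single m (Poly_Mapping.lookup p m)) k"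
    unfolding lookup_sum lookup_single
    by (cases "k \<in> Poly_Mapping.keys p") (auto simp: when_def in_keys_iff)
qed

lemma poly_subst_mult: "poly_subst \<sigma> (p * q) = poly_subst \<sigma> p * poly_subst \<sigma> q"
proof -
  have "p * q = (\<Sum>m\<in>Poly_Mapping.keys p. \<Sum>m'\<in>Poly_Mapping.keys q.
       Poly_Mapping.single (m + m') (Poly_Mapping.lookup p m * Poly_Mapping.lookup q m'))"
    apply (subst poly_mapping_expand[of p], subst poly_mapping_expand[of q])
    by (simp add: sum_distrib_left sum_distrib_right mult_single sum.swap[of _ "Poly_Mapping.keys q"])
  then have "poly_subst \<sigma> (p * q) = (\<Sum>m\<in>Poly_Mapping.keys p. \<Sum>m'\<in>Poly_Mapping.keys q.
       poly_const (Poly_Mapping.lookup p m) * monom_eval \<sigma> m * (poly_const (Poly_Mapping.lookup q m') * monom_eval \<sigma> m'))"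
    by (simp add: poly_subst_sum poly_subst_single monom_eval_add poly_const_mult mult_ac sum.swap[of _ "Poly_Mapping.keys q"])
  also have "\<dots> = poly_subst \<sigma> p * poly_subst \<sigma> q"
    unfolding poly_subst_def sum_distrib_left sum_distrib_right by (rule sum.swap)
  finally show ?thesis .
qed

lemma poly_subst_uminus: "poly_subst \<sigma> (- p) = - poly_subst \<sigma> p"
  using poly_subst_add[of \<sigma> p "-p"] by (simp add: eq_neg_iff_add_eq_0 add.commute)

lemma poly_subst_diff: "poly_subst \<sigma> (p - q) = poly_subst \<sigma> p - poly_subst \<sigma> q"
  using poly_subst_add[of \<sigma> p "-q"] by (simp add: poly_subst_uminus)

lemma poly_subst_1[simp]: "poly_subst \<sigma> 1 = 1"
  using poly_subst_single[of \<sigma> 0 1] by (simp add: poly_const_def)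

lemma poly_subst_const[simp]: "poly_subst \<sigma> (poly_const c) = poly_const c"
  using poly_subst_single[of \<sigma> 0 c] by (simp add: poly_const_def)

lemma monom_eval_single: "monom_eval \<sigma> (Poly_Mapping.single a (1::nat)) = \<sigma> a"
  unfolding monom_eval_def by (simp add: keys_single lookup_single)

lemma poly_subst_tvar[simp]: "poly_subst \<sigma> (tvar a) = \<sigma> a"
  unfolding tvar_def poly_subst_single monom_eval_single by simp

lemma poly_subst_power: "poly_subst \<sigma> (p ^ k) = poly_subst \<sigma> p ^ k"
  by (induction k) (auto simp: poly_subst_mult)

lemma poly_subst_prod: "poly_subst \<sigma> (prod f A) = (\<Prod>x\<in>A. poly_subst \<sigma> (f x))"
  by (induction A rule: infinite_finite_induct) (auto simp: poly_subst_mult)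

lemma poly_subst_dvd: "x dvd y \<Longrightarrow> poly_subst \<sigma> x dvd poly_subst \<sigma> y"
  by (auto simp: dvd_def poly_subst_mult)

lemma tvar_power: "tvar a ^ e = Poly_Mapping.single (Poly_Mapping.single a e) 1"
  by (induction e) (auto simp: tvar_def mult_single single_add[symmetric] add.commute)

lemma prod_single_1: "(\<Prod>x\<in>A. Poly_Mapping.single (f x) (1::complex)) = Poly_Mapping.single (\<Sum>x\<in>A. f x) 1"
  by (induction A rule: infinite_finite_induct) (auto simp: mult_single)

lemma monom_eval_tvar: "monom_eval tvar m = Poly_Mapping.single m 1"
proof -
  have "monom_eval tvar m = Poly_Mapping.single (\<Sum>k\<in>Poly_Mapping.keys m. Poly_Mapping.single k (Poly_Mapping.lookup m k)) 1"
    by (simp add: monom_eval_def tvar_power prod_single_1)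
  also have "\<dots> = Poly_Mapping.single m 1" using poly_mapping_expand[of m] by simp
  finally show ?thesis .
qed

lemma poly_subst_tvar_id[simp]: "poly_subst tvar p = p"
proof -
  have "poly_subst tvar p = (\<Sum>m\<in>Poly_Mapping.keys p. Poly_Mapping.single m (Poly_Mapping.lookup p m))"
    by (simp add: poly_subst_def monom_eval_tvar poly_const_def mult_single)
  then show ?thesis using poly_mapping_expand[of p] by simp
qed

lemma poly_subst_monom_eval: "poly_subst \<sigma> (monom_eval \<tau> m) = monom_eval (\<lambda>k. poly_subst \<sigma> (\<tau> k)) m"
  by (simp add: monom_eval_def poly_subst_prod poly_subst_power)

lemma poly_subst_poly_subst: "poly_subst \<sigma> (poly_subst \<tau> p) = poly_subst (\<lambda>k. poly_subst \<sigma> (\<tau> k)) p"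
  unfolding poly_subst_def[of \<tau> p] by (simp add: poly_subst_sum poly_subst_mult poly_subst_monom_eval poly_subst_def[of "\<lambda>k. poly_subst \<sigma> (\<tau> k)"])

definition poly_vars :: "mpoly \<Rightarrow> nat set" where
  "poly_vars p = (\<Union>m\<in>Poly_Mapping.keys p. Poly_Mapping.keys m)"

lemma monom_eval_cong: "(\<And>k. k \<in> Poly_Mapping.keys m \<Longrightarrow> \<sigma> k = \<tau> k) \<Longrightarrow> monom_eval \<sigma> m = monom_eval \<tau> m"
  unfolding monom_eval_def by (rule prod.cong) auto

lemma poly_subst_cong: "(\<And>k. k \<in> poly_vars p \<Longrightarrow> \<sigma> k = \<tau> k) \<Longrightarrow> poly_subst \<sigma> p = poly_subst \<tau> p"
  unfolding poly_subst_def poly_vars_def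
  by (intro sum.cong refl arg_cong2[where f="(*)"] monom_eval_cong) auto

lemma dvd_cong_mult:
  fixes d :: "'a::comm_ring_1"
  assumes "d dvd a - b" "d dvd c - e" shows "d dvd a * c - b * e"
proof -
  have "a * c - b * e = (a - b) * c + b * (c - e)" by (simp add: algebra_simps)
  then show ?thesis using assms by (simp add: dvd_add dvd_mult2 dvd_mult)
qed

lemma dvd_cong_power:
  fixes d :: "'a::comm_ring_1"
  assumes "d dvd a - b" shows "d dvd a ^ k - b ^ k"
  by (induction k) (auto intro: dvd_cong_mult assms)

lemma dvd_cong_prod:
  fixes d :: "'a::comm_ring_1"
  assumes "\<And>x. x \<in> A \<Longrightarrow> d dvd f x - g x" shows "d dvd prod f A - prod g A"
  using assms by (induction A rule: infinite_finite_induct) (auto intro: dvd_cong_mult)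

lemma dvd_poly_subst_diff:
  assumes "\<And>k. d dvd \<sigma> k - \<tau> k" shows "d dvd poly_subst \<sigma> p - poly_subst \<tau> p"
proof -
  have "\<And>m. d dvd monom_eval \<sigma> m - monom_eval \<tau> m"
    unfolding monom_eval_def by (intro dvd_cong_prod dvd_cong_power assms)
  then have "d dvd (\<Sum>m\<in>Poly_Mapping.keys p. poly_const (Poly_Mapping.lookup p m) * (monom_eval \<sigma> m - monom_eval \<tau> m))"
    by (intro dvd_sum dvd_mult) auto
  then show ?thesis by (simp add: poly_subst_def algebra_simps sum_subtractf)
qed

lemma tvar_inj[simp]: "tvar a = tvar b \<longleftrightarrow> a = b"
proof
  assume "tvar a = tvar b"
  then have "Poly_Mapping.lookup (tvar a) (Poly_Mapping.single a 1) = Poly_Mapping.lookup (tvar b) (Poly_Mapping.single a 1)" by simp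
  then have "Poly_Mapping.single b (1::nat) = Poly_Mapping.single a 1"
    by (auto simp: tvar_def lookup_single when_def split: if_splits)
  then have "Poly_Mapping.lookup (Poly_Mapping.single b (1::nat)) a = Poly_Mapping.lookup (Poly_Mapping.single a 1) a" by simp
  then show "a = b" by (auto simp: lookup_single when_def split: if_splits)
qed simp

lemma tvar_neq_0[simp]: "tvar a \<noteq> 0"
  unfolding tvar_def by (metis lookup_single_eq lookup_zero one_neq_zero)

definition rename_vars :: "(nat \<Rightarrow> nat) \<Rightarrow> mpoly \<Rightarrow> mpoly" where
  "rename_vars \<pi> p = poly_subst (\<lambda>k. tvar (\<pi> k)) p"

lemma rename_vars_tvar[simp]: "rename_vars \<pi> (tvar a) = tvar (\<pi> a)" by (simp add: rename_vars_def)
lemma rename_vars_diff: "rename_vars \<pi> (p - q) = rename_vars \<pi> p - rename_vars \<pi> q" by (simp add: rename_vars_def poly_subst_diff)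
lemma rename_vars_mult: "rename_vars \<pi> (p * q) = rename_vars \<pi> p * rename_vars \<pi> q" by (simp add: rename_vars_def poly_subst_mult)
lemma rename_vars_0[simp]: "rename_vars \<pi> 0 = 0" by (simp add: rename_vars_def)
lemma rename_vars_prod: "rename_vars \<pi> (prod f A) = (\<Prod>x\<in>A. rename_vars \<pi> (f x))" by (simp add: rename_vars_def poly_subst_prod)
lemma rename_vars_rename_vars: "rename_vars \<pi> (rename_vars \<rho> p) = rename_vars (\<pi> \<circ> \<rho>) p" by (simp add: rename_vars_def poly_subst_poly_subst)
lemma rename_vars_id[simp]: "rename_vars id p = p" by (simp add: rename_vars_def)
lemma rename_vars_dvd: "x dvd y \<Longrightarrow> rename_vars \<pi> x dvd rename_vars \<pi> y" by (simp add: rename_vars_def poly_subst_dvd)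

section \<open>Divisibility by the roots \<open>t\<^sub>a - t\<^sub>b\<close>\<close>

lemma tdiff_dvd_sub_rename_transpose: "(tvar a - tvar b) dvd p - rename_vars (transpose a b) p"
proof -
  have "(tvar a - tvar b) dvd poly_subst tvar p - poly_subst (\<lambda>k. tvar (transpose a b k)) p"
  proof (rule dvd_poly_subst_diff)
    fix k
    show "(tvar a - tvar b) dvd tvar k - tvar (transpose a b k)"
    proof (cases "k = a \<or> k = b")
      case True
      then show ?thesis
      proof
        assume "k = a" then show ?thesis by (simp add: transpose_def)
      next
        assume kb: "k = b"
        show ?thesis using dvd_minus_iff[of "tvar a - tvar b" "tvar a - tvar b"] kb by (simp add: transpose_def)
      qed
    qed (simp add: transpose_def)
  qed
  then show ?thesis by (simp add: rename_vars_def)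
qed

definition identify_vars :: "nat \<Rightarrow> nat \<Rightarrow> mpoly \<Rightarrow> mpoly" where
  "identify_vars a b p = poly_subst (tvar(a := tvar b)) p"

lemma tdiff_dvd_sub_identify_vars: "(tvar a - tvar b) dvd p - identify_vars a b p"
proof -
  have "(tvar a - tvar b) dvd poly_subst tvar p - poly_subst (tvar(a := tvar b)) p"
    by (rule dvd_poly_subst_diff) auto
  then show ?thesis by (simp add: identify_vars_def)
qed

lemma tdiff_dvd_iff_identify_vars: "(tvar a - tvar b) dvd p \<longleftrightarrow> identify_vars a b p = 0"
proof
  assume "(tvar a - tvar b) dvd p"
  then obtain q where "p = (tvar a - tvar b) * q" by (auto simp: dvd_def)
  then show "identify_vars a b p = 0" by (simp add: identify_vars_def poly_subst_mult poly_subst_diff)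
next
  assume "identify_vars a b p = 0"
  then show "(tvar a - tvar b) dvd p" using tdiff_dvd_sub_identify_vars[of a b p] by simp
qed

lemma identify_vars_tdiff_neq_0:
  assumes "a \<noteq> b" "c \<noteq> e" "\<not> (c = a \<and> e = b)" "\<not> (c = b \<and> e = a)"
  shows "identify_vars a b (tvar c - tvar e) \<noteq> 0"
  using assms by (auto simp: identify_vars_def poly_subst_diff)

lemma tdiff_not_dvd_tdiff:
  assumes "a \<noteq> b" "c \<noteq> e" "\<not> (c = a \<and> e = b)" "\<not> (c = b \<and> e = a)"
  shows "\<not> (tvar a - tvar b) dvd (tvar c - tvar e)"
  using identify_vars_tdiff_neq_0[OF assms] tdiff_dvd_iff_identify_vars by blast

lemma tdiff_dvd_multD:
  assumes "(tvar a - tvar b) dvd x * y"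
  shows "(tvar a - tvar b) dvd x \<or> (tvar a - tvar b) dvd y"
  using assms unfolding tdiff_dvd_iff_identify_vars by (simp add: identify_vars_def poly_subst_mult)

lemma tdiff_not_dvd_prod_tdiff:
  assumes "finite E" "a \<noteq> b" "(a, b) \<notin> E" "(b, a) \<notin> E" "\<And>c e. (c, e) \<in> E \<Longrightarrow> c \<noteq> e"
  shows "\<not> (tvar a - tvar b) dvd (\<Prod>(c, e)\<in>E. tvar c - tvar e)"
proof -
  have "identify_vars a b (tvar c - tvar e) \<noteq> 0" if "(c, e) \<in> E" for c e
    by (rule identify_vars_tdiff_neq_0) (use assms that in auto)
  then have "(\<Prod>(c, e)\<in>E. identify_vars a b (tvar c - tvar e)) \<noteq> 0"
    using assms(1) by (auto simp: prod_zero_iff)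
  then show ?thesis
    by (simp add: tdiff_dvd_iff_identify_vars identify_vars_def poly_subst_prod case_prod_beta)
qed

lemma prod_tdiff_dvd:
  assumes "finite E" "\<And>a b. (a, b) \<in> E \<Longrightarrow> a \<noteq> b"
    "\<And>a b. (a, b) \<in> E \<Longrightarrow> (b, a) \<notin> E"
    "\<And>a b. (a, b) \<in> E \<Longrightarrow> (tvar a - tvar b) dvd f"
  shows "(\<Prod>(a, b)\<in>E. tvar a - tvar b) dvd f"
  using assms
proof (induction E arbitrary: f rule: finite_induct)
  case (insert x E)
  obtain a b where x: "x = (a, b)" by force
  have "(\<Prod>(a, b)\<in>E. tvar a - tvar b) dvd f"
    by (rule insert.IH) (use insert.prems in blast)+
  then obtain g where g: "f = (\<Prod>(a, b)\<in>E. tvar a - tvar b) * g" by (auto simp: dvd_def)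
  have "\<not> (tvar a - tvar b) dvd (\<Prod>(c, e)\<in>E. tvar c - tvar e)"
    by (rule tdiff_not_dvd_prod_tdiff) (use insert x in blast)+
  moreover have "(tvar a - tvar b) dvd (\<Prod>(c, e)\<in>E. tvar c - tvar e) * g"
    using insert.prems(3)[of a b] g x by simp
  ultimately have "(tvar a - tvar b) dvd g"
    using tdiff_dvd_multD by blast
  then show ?case using g x insert.hyps by (auto simp: mult_ac)
qed simp

section \<open>The ring \<open>P\<close> and homogeneity\<close>

lemma Pring_iff: "p \<in> Pring N \<longleftrightarrow> poly_vars p \<subseteq> {1..N}"
  by (auto simp: Pring_def poly_vars_def)

lemma Pring_0[simp]: "0 \<in> Pring N" by (simp add: Pring_def)

lemma Pring_add: "p \<in> Pring N \<Longrightarrow> q \<in> Pring N \<Longrightarrow> p + q \<in> Pring N"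
  unfolding Pring_def using keys_add[of p q] by blast

lemma Pring_uminus: "p \<in> Pring N \<Longrightarrow> - p \<in> Pring N"
  unfolding Pring_def by simp

lemma Pring_diff: "p \<in> Pring N \<Longrightarrow> q \<in> Pring N \<Longrightarrow> p - q \<in> Pring N"
  using Pring_add[of p N "-q"] Pring_uminus[of q N] by simp

lemma Pring_mult: "p \<in> Pring N \<Longrightarrow> q \<in> Pring N \<Longrightarrow> p * q \<in> Pring N"
proof -
  assume p: "p \<in> Pring N" and q: "q \<in> Pring N"
  show ?thesis unfolding Pring_def mem_Collect_eq
  proof
    fix m assume "m \<in> Poly_Mapping.keys (p * q)"
    then obtain a b where "m = a + b" "a \<in> Poly_Mapping.keys p" "b \<in> Poly_Mapping.keys q"
      using keys_mult[of p q] by blast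
    then show "Poly_Mapping.keys m \<subseteq> {1..N}"
      using p q keys_add[of a b] unfolding Pring_def by blast
  qed
qed

lemma Pring_single: "Poly_Mapping.keys m \<subseteq> {1..N} \<Longrightarrow> Poly_Mapping.single m c \<in> Pring N"
  unfolding Pring_def by simp

lemma Pring_const[simp]: "poly_const c \<in> Pring N"
  unfolding poly_const_def by (rule Pring_single) simp

lemma Pring_1[simp]: "1 \<in> Pring N"
  using Pring_const[of 1 N] by simp

lemma Pring_tvar: "a \<in> {1..N} \<Longrightarrow> tvar a \<in> Pring N"
  unfolding tvar_def by (rule Pring_single) simp

lemma Pring_sum: "(\<And>x. x \<in> A \<Longrightarrow> f x \<in> Pring N) \<Longrightarrow> sum f A \<in> Pring N"
  by (induction A rule: infinite_finite_induct) (auto intro: Pring_add)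

lemma Pring_prod: "(\<And>x. x \<in> A \<Longrightarrow> f x \<in> Pring N) \<Longrightarrow> prod f A \<in> Pring N"
  by (induction A rule: infinite_finite_induct) (auto intro: Pring_mult)

lemma Pring_power: "p \<in> Pring N \<Longrightarrow> p ^ k \<in> Pring N"
  by (induction k) (auto intro: Pring_mult)

lemma Pring_poly_subst: "(\<And>k. k \<in> poly_vars p \<Longrightarrow> \<sigma> k \<in> Pring N) \<Longrightarrow> poly_subst \<sigma> p \<in> Pring N"
  unfolding poly_subst_def monom_eval_def poly_vars_def
  by (intro Pring_sum Pring_mult Pring_const Pring_prod Pring_power) auto

lemma Pring_rename_vars: "p \<in> Pring N \<Longrightarrow> \<pi> ` {1..N} \<subseteq> {1..N} \<Longrightarrow> rename_vars \<pi> p \<in> Pring N"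
  unfolding rename_vars_def
proof (rule Pring_poly_subst, rule Pring_tvar)
  fix k assume "p \<in> Pring N" "\<pi> ` {1..N} \<subseteq> {1..N}" "k \<in> poly_vars p"
  then show "\<pi> k \<in> {1..N}" unfolding Pring_iff by blast
qed

lemma Pring_quotient:
  assumes f: "f \<in> Pring N" and g: "g \<in> Pring N" "g \<noteq> 0" and eq: "f = g * q"
  shows "q \<in> Pring N"
proof -
  define E where "E = (\<lambda>k. if k \<in> {1..N} then tvar k else 0)"
  have EP: "poly_subst E q \<in> Pring N" by (rule Pring_poly_subst) (auto simp: E_def intro: Pring_tvar)
  have idf: "poly_subst E p = p" if "p \<in> Pring N" for p
  proof -
    have "poly_subst E p = poly_subst tvar p"
      by (rule poly_subst_cong) (use that in \<open>auto simp: E_def Pring_iff\<close>)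
    then show ?thesis by simp
  qed
  have "g * q = poly_subst E f" using eq idf[OF f] by simp
  also have "\<dots> = poly_subst E g * poly_subst E q" using eq by (simp add: poly_subst_mult)
  finally have "g * q = g * poly_subst E q" using idf[OF g(1)] by simp
  then have "q = poly_subst E q" using g(2) by (metis mult_left_cancel)
  then show ?thesis using EP by simp
qed

lemma Pring_marker_notin_vars: "p \<in> Pring N \<Longrightarrow> 0 \<notin> poly_vars p"
  by (auto simp: Pring_iff)

definition zero_marker :: "mpoly \<Rightarrow> mpoly" where "zero_marker p = poly_subst (tvar(0 := 0)) p"

lemma zero_marker_id: "0 \<notin> poly_vars p \<Longrightarrow> zero_marker p = p"
proof -
  assume "0 \<notin> poly_vars p"
  then have "poly_subst (tvar(0 := 0)) p = poly_subst tvar p" by (intro poly_subst_cong) (metis fun_upd_other)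
  then show ?thesis by (simp add: zero_marker_def)
qed

text \<open>The variable \<open>t\<^sub>0\<close> is not in \<open>P\<close>; substituting \<open>t\<^sub>k \<mapsto> t\<^sub>0 t\<^sub>k\<close> marks every monomial
  with its degree, so that homogeneity becomes an equation.\<close>

definition mark_degree :: "mpoly \<Rightarrow> mpoly" where "mark_degree p = poly_subst (\<lambda>k. tvar 0 * tvar k) p"

definition monom_degree :: "(nat \<Rightarrow>\<^sub>0 nat) \<Rightarrow> nat" where
  "monom_degree m = (\<Sum>k\<in>Poly_Mapping.keys m. Poly_Mapping.lookup m k)"

lemma monom_eval_times: "monom_eval (\<lambda>k. f k * g k) m = monom_eval f m * monom_eval g m"
  by (simp add: monom_eval_def power_mult_distrib prod.distrib)

lemma monom_eval_const: "monom_eval (\<lambda>k. c) m = c ^ monom_degree m"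
  by (simp add: monom_eval_def monom_degree_def power_sum)

lemma mark_degree_single: "mark_degree (Poly_Mapping.single m c) = Poly_Mapping.single (Poly_Mapping.single 0 (monom_degree m) + m) c"
proof -
  have "mark_degree (Poly_Mapping.single m c) = poly_const c * (tvar 0 ^ monom_degree m * Poly_Mapping.single m 1)"
    unfolding mark_degree_def poly_subst_single monom_eval_times monom_eval_const monom_eval_tvar ..
  also have "\<dots> = Poly_Mapping.single (Poly_Mapping.single 0 (monom_degree m) + m) c"
    by (simp add: tvar_power poly_const_def mult_single)
  finally show ?thesis .
qed

lemma mark_degree_expand: "mark_degree p = (\<Sum>m\<in>Poly_Mapping.keys p. Poly_Mapping.single (Poly_Mapping.single 0 (monom_degree m) + m) (Poly_Mapping.lookup p m))"
proof -
  have "mark_degree p = mark_degree (\<Sum>m\<in>Poly_Mapping.keys p. Poly_Mapping.single m (Poly_Mapping.lookup p m))"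
    using poly_mapping_expand[of p] by simp
  also have "\<dots> = (\<Sum>m\<in>Poly_Mapping.keys p. Poly_Mapping.single (Poly_Mapping.single 0 (monom_degree m) + m) (Poly_Mapping.lookup p m))"
    unfolding mark_degree_def poly_subst_sum by (simp add: mark_degree_single[unfolded mark_degree_def])
  finally show ?thesis .
qed

lemma marker_power_expand: "tvar 0 ^ d * p = (\<Sum>m\<in>Poly_Mapping.keys p. Poly_Mapping.single (Poly_Mapping.single 0 d + m) (Poly_Mapping.lookup p m))"
proof -
  have "tvar 0 ^ d * p = tvar 0 ^ d * (\<Sum>m\<in>Poly_Mapping.keys p. Poly_Mapping.single m (Poly_Mapping.lookup p m))"
    using poly_mapping_expand[of p] by simp
  then show ?thesis by (simp add: sum_distrib_left tvar_power mult_single)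
qed

lemma marked_monom_eq_iff:
  fixes m m' :: "nat \<Rightarrow>\<^sub>0 nat"
  assumes "Poly_Mapping.lookup m 0 = 0" "Poly_Mapping.lookup m' 0 = 0"
  shows "Poly_Mapping.single 0 d + m = Poly_Mapping.single 0 d' + m' \<longleftrightarrow> d = d' \<and> m = m'"
proof
  assume e: "Poly_Mapping.single 0 d + m = Poly_Mapping.single 0 d' + m'"
  have "Poly_Mapping.lookup (Poly_Mapping.single 0 d + m) 0 = Poly_Mapping.lookup (Poly_Mapping.single 0 d' + m') 0"
    by (simp only: e)
  then have "d = d'" using assms by (simp add: lookup_add)
  with e show "d = d' \<and> m = m'" by simp
qed simp

lemma lookup_marked_sum:
  assumes "0 \<notin> poly_vars p" and m: "m \<in> Poly_Mapping.keys p"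
  shows "Poly_Mapping.lookup
      (\<Sum>m'\<in>Poly_Mapping.keys p. Poly_Mapping.single (Poly_Mapping.single 0 (f m') + m') (Poly_Mapping.lookup p m'))
      (Poly_Mapping.single 0 d + m) = (if f m = d then Poly_Mapping.lookup p m else 0)"
proof -
  have "Poly_Mapping.lookup m' 0 = 0" if "m' \<in> Poly_Mapping.keys p" for m'
    using assms(1) that by (auto simp: poly_vars_def in_keys_iff)
  then have "{m' \<in> Poly_Mapping.keys p. Poly_Mapping.single 0 (f m') + m' = Poly_Mapping.single 0 d + m}
      = (if f m = d then {m} else {})"
    using m by (auto simp: marked_monom_eq_iff)
  then show ?thesis
    unfolding lookup_sum lookup_single when_def by (simp add: sum.inter_filter[symmetric])
qed

lemma homogeneous_iff_mark_degree:
  assumes p: "0 \<notin> poly_vars p"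
  shows "homogeneous d p \<longleftrightarrow> mark_degree p = tvar 0 ^ d * p"
proof
  assume "homogeneous d p"
  then show "mark_degree p = tvar 0 ^ d * p"
    unfolding mark_degree_expand marker_power_expand
    by (intro sum.cong) (auto simp: homogeneous_def monom_degree_def)
next
  assume e: "mark_degree p = tvar 0 ^ d * p"
  show "homogeneous d p" unfolding homogeneous_def
  proof
    fix m assume m: "m \<in> Poly_Mapping.keys p"
    have "Poly_Mapping.lookup (mark_degree p) (Poly_Mapping.single 0 (monom_degree m) + m)
        = Poly_Mapping.lookup (tvar 0 ^ d * p) (Poly_Mapping.single 0 (monom_degree m) + m)"
      by (simp only: e)
    then have "monom_degree m = d"
      unfolding mark_degree_expand marker_power_expand lookup_marked_sum[OF p m]
      using m by (auto simp: in_keys_iff split: if_splits)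
    then show "(\<Sum>k\<in>Poly_Mapping.keys m. Poly_Mapping.lookup m k) = d" by (simp add: monom_degree_def)
  qed
qed

lemma homogeneousI: "p \<in> Pring N \<Longrightarrow> mark_degree p = tvar 0 ^ d * p \<Longrightarrow> homogeneous d p"
  using homogeneous_iff_mark_degree Pring_marker_notin_vars by blast

lemma homogeneousD: "p \<in> Pring N \<Longrightarrow> homogeneous d p \<Longrightarrow> mark_degree p = tvar 0 ^ d * p"
  using homogeneous_iff_mark_degree Pring_marker_notin_vars by blast

lemma homogeneous_0[simp]: "homogeneous d 0" by (simp add: homogeneous_def)

lemma homogeneous_add: "p \<in> Pring N \<Longrightarrow> q \<in> Pring N \<Longrightarrow> homogeneous d p \<Longrightarrow> homogeneous d q \<Longrightarrow> homogeneous d (p + q)"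
  by (rule homogeneousI[OF Pring_add]) (auto simp: mark_degree_def poly_subst_add homogeneousD[unfolded mark_degree_def] distrib_left)

lemma homogeneous_uminus: "p \<in> Pring N \<Longrightarrow> homogeneous d p \<Longrightarrow> homogeneous d (- p)"
  by (rule homogeneousI[OF Pring_uminus]) (auto simp: mark_degree_def poly_subst_uminus homogeneousD[unfolded mark_degree_def])

lemma homogeneous_diff: "p \<in> Pring N \<Longrightarrow> q \<in> Pring N \<Longrightarrow> homogeneous d p \<Longrightarrow> homogeneous d q \<Longrightarrow> homogeneous d (p - q)"
  using homogeneous_add[of p N "-q" d] homogeneous_uminus[of q N d] Pring_uminus[of q N] by simp

lemma homogeneous_mult:
  assumes "p \<in> Pring N" "q \<in> Pring N" "homogeneous d p" "homogeneous e q"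
  shows "homogeneous (d + e) (p * q)"
proof (rule homogeneousI[OF Pring_mult[OF assms(1,2)]])
  have "mark_degree (p * q) = mark_degree p * mark_degree q" by (simp add: mark_degree_def poly_subst_mult)
  also have "\<dots> = (tvar 0 ^ d * p) * (tvar 0 ^ e * q)" using homogeneousD assms by metis
  finally show "mark_degree (p * q) = tvar 0 ^ (d + e) * (p * q)" by (simp add: power_add mult_ac)
qed

lemma homogeneous_tvar: "homogeneous 1 (tvar a)"
  by (simp add: homogeneous_def tvar_def lookup_single)

lemma homogeneous_const: "homogeneous 0 (poly_const c)"
  by (cases "c = 0") (simp_all add: homogeneous_def poly_const_def)

lemma homogeneous_tdiff: "a \<in> {1..N} \<Longrightarrow> b \<in> {1..N} \<Longrightarrow> homogeneous 1 (tvar a - tvar b)"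
  using homogeneous_diff[of "tvar a" N "tvar b" 1] Pring_tvar[of a N] Pring_tvar[of b N] homogeneous_tvar[of a] homogeneous_tvar[of b] by blast

lemma homogeneous_prod:
  "(\<And>x. x \<in> A \<Longrightarrow> f x \<in> Pring N) \<Longrightarrow> (\<And>x. x \<in> A \<Longrightarrow> homogeneous (g x) (f x)) \<Longrightarrow> homogeneous (sum g A) (prod f A)"
proof (induction A rule: infinite_finite_induct)
  case (infinite A)
  then show ?case using homogeneous_const[of 1] by simp
next
  case empty
  then show ?case using homogeneous_const[of 1] by simp
next
  case (insert x F)
  then show ?case by (auto intro!: homogeneous_mult[of _ N] Pring_prod)
qed

lemma homogeneous_rename_vars:
  assumes "p \<in> Pring N" "homogeneous d p" "\<pi> 0 = 0" "\<pi> ` {1..N} \<subseteq> {1..N}"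
  shows "homogeneous d (rename_vars \<pi> p)"
proof (rule homogeneousI[OF Pring_rename_vars[OF assms(1,4)]])
  have "mark_degree (rename_vars \<pi> p) = rename_vars \<pi> (mark_degree p)"
    using assms(3) by (simp add: mark_degree_def rename_vars_def poly_subst_poly_subst poly_subst_mult)
  also have "\<dots> = tvar 0 ^ d * rename_vars \<pi> p"
    using homogeneousD[OF assms(1,2)] assms(3) by (simp only: rename_vars_mult) (simp add: rename_vars_def poly_subst_power)
  finally show "mark_degree (rename_vars \<pi> p) = tvar 0 ^ d * rename_vars \<pi> p" .
qed

lemma zero_marker_marker_mult: "zero_marker (tvar 0 * x) = 0"
  by (simp add: zero_marker_def poly_subst_mult)

lemma homogeneous_quotient_linear:
  assumes L: "L \<in> Pring N" "L \<noteq> 0" "homogeneous 1 L"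
    and num: "num \<in> Pring N" "homogeneous d num" and eq: "num = L * q"
  shows "homogeneous (d - 1) q \<and> (d = 0 \<longrightarrow> q = 0)"
proof -
  have q: "q \<in> Pring N" using Pring_quotient[OF num(1) L(1,2) eq] .
  have "mark_degree num = tvar 0 ^ d * num" using homogeneousD[OF num] .
  also have "mark_degree num = tvar 0 * L * mark_degree q" using eq homogeneousD[OF L(1,3)] by (simp add: mark_degree_def poly_subst_mult)
  finally have e: "tvar 0 * L * mark_degree q = tvar 0 ^ d * L * q" using eq by (simp add: mult_ac)
  show ?thesis
  proof (cases d)
    case 0
    then have "L * (tvar 0 * mark_degree q) = L * q" using e by (simp add: mult_ac)
    then have "tvar 0 * mark_degree q = q" using L(2) by simp
    then have "q = 0" using zero_marker_marker_mult[of "mark_degree q"] zero_marker_id[OF Pring_marker_notin_vars[OF q]] by simp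
    then show ?thesis by simp
  next
    case (Suc d')
    then have "(tvar 0 * L) * mark_degree q = (tvar 0 * L) * (tvar 0 ^ d' * q)" using e by (simp add: mult_ac)
    then have "mark_degree q = tvar 0 ^ d' * q" using L(2) by simp
    then show ?thesis using homogeneousI[OF q] Suc by simp
  qed
qed

lemma homogeneous_dvd_degree_le:
  assumes f: "f \<in> Pring N" "f \<noteq> 0" "homogeneous d f"
    and g: "g \<in> Pring N" "homogeneous k g" "g dvd f"
  shows "k \<le> d"
proof (rule ccontr)
  assume kd: "\<not> k \<le> d"
  obtain q where eq: "f = g * q" using g(3) by (auto simp: dvd_def)
  have gne: "g \<noteq> 0" using eq f(2) by auto
  have q: "q \<in> Pring N" using Pring_quotient[OF f(1) g(1) gne eq] .
  have "tvar 0 ^ d * f = mark_degree f" using homogeneousD[OF f(1,3)] by simp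
  also have "\<dots> = tvar 0 ^ k * g * mark_degree q" using eq homogeneousD[OF g(1,2)] by (simp add: mark_degree_def poly_subst_mult)
  finally have "g * (tvar 0 ^ d * q) = g * (tvar 0 ^ k * mark_degree q)"
    using eq by (simp add: mult_ac)
  then have "tvar 0 ^ d * q = tvar 0 ^ k * mark_degree q" using gne by simp
  moreover have "tvar 0 ^ k = tvar 0 ^ d * (tvar 0 * tvar 0 ^ (k - d - 1))"
  proof -
    have "k = d + Suc (k - d - 1)" using kd by simp
    then have "tvar 0 ^ k = tvar 0 ^ (d + Suc (k - d - 1))" by (rule arg_cong)
    then show ?thesis by (simp only: power_add power_Suc)
  qed
  ultimately have "tvar 0 ^ d * q = tvar 0 ^ d * (tvar 0 * (tvar 0 ^ (k - d - 1) * mark_degree q))"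
    by (simp add: mult_ac)
  then have "q = tvar 0 * (tvar 0 ^ (k - d - 1) * mark_degree q)" by simp
  then have "q = 0" using zero_marker_marker_mult[of "tvar 0 ^ (k - d - 1) * mark_degree q"] zero_marker_id[OF Pring_marker_notin_vars[OF q]] by simp
  then show False using eq f(2) by simp
qed

section \<open>Partial sums, inversions and dominance\<close>

definition psum :: "nat \<Rightarrow> (nat \<Rightarrow> nat) \<Rightarrow> nat" where "psum j \<mu> = (\<Sum>a\<in>{1..j}. \<mu> a)"

definition inversions :: "nat \<Rightarrow> (nat \<Rightarrow> nat) \<Rightarrow> (nat \<times> nat) set" where
  "inversions N \<mu> = {(a, b). a \<in> {1..N} \<and> b \<in> {1..N} \<and> a < b \<and> \<mu> a > \<mu> b}"

definition psum_total :: "nat \<Rightarrow> (nat \<Rightarrow> nat) \<Rightarrow> nat" where "psum_total M \<mu> = (\<Sum>j\<in>{1..M}. psum j \<mu>)"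

lemma len_eq_card_inversions: "len N \<mu> = card (inversions N \<mu>)" by (simp add: len_def inversions_def)

lemma finite_inversions[simp]: "finite (inversions N \<mu>)"
  by (rule finite_subset[of _ "{1..N} \<times> {1..N}"]) (auto simp: inversions_def)

lemma dom_ge_iff_psum: "dom_ge N \<mu> \<kappa> \<longleftrightarrow> (\<forall>j\<in>{1..N}. psum j \<mu> \<ge> psum j \<kappa>)"
  by (simp add: dom_ge_def psum_def)

lemma Lambda_le1: "\<mu> \<in> Lambda N n \<Longrightarrow> \<mu> j \<le> 1"
  by (cases "j \<in> {1..N}") (auto simp: Lambda_def)

lemma Lambda_outside: "\<mu> \<in> Lambda N n \<Longrightarrow> j \<notin> {1..N} \<Longrightarrow> \<mu> j = 0"
  by (auto simp: Lambda_def)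

lemma Lambda_psum: "\<mu> \<in> Lambda N n \<Longrightarrow> psum N \<mu> = n"
  by (auto simp: Lambda_def psum_def)

lemma Lambda_finite: "finite (Lambda N n)"
proof -
  have "Lambda N n \<subseteq> (\<lambda>g x. if x \<in> {1..N} then g x else 0) ` ({1..N} \<rightarrow>\<^sub>E {0..1::nat})"
  proof
    fix \<mu> assume m: "\<mu> \<in> Lambda N n"
    show "\<mu> \<in> (\<lambda>g x. if x \<in> {1..N} then g x else 0) ` ({1..N} \<rightarrow>\<^sub>E {0..1})"
    proof (rule image_eqI[of _ _ "restrict \<mu> {1..N}"])
      show "\<mu> = (\<lambda>x. if x \<in> {1..N} then restrict \<mu> {1..N} x else 0)"
        using Lambda_outside[OF m] by (auto simp: fun_eq_iff)
      show "restrict \<mu> {1..N} \<in> {1..N} \<rightarrow>\<^sub>E {0..1}"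
        using Lambda_le1[OF m] by auto
    qed
  qed
  then show ?thesis by (rule finite_subset) (auto intro!: finite_imageI finite_PiE)
qed

lemma Lambda_comp_permutes:
  assumes "\<pi> permutes {1..N}" "\<mu> \<in> Lambda N n"
  shows "\<mu> \<circ> \<pi> \<in> Lambda N n"
proof -
  have b: "bij_betw \<pi> {1..N} {1..N}" using assms(1) by (rule permutes_imp_bij)
  have "(\<Sum>j\<in>{1..N}. \<mu> (\<pi> j)) = (\<Sum>j\<in>{1..N}. \<mu> j)" by (rule sum.reindex_bij_betw[OF b])
  moreover have "\<And>j. j \<in> {1..N} \<Longrightarrow> \<pi> j \<in> {1..N}" using permutes_in_image[OF assms(1)] by blast
  moreover have "\<And>j. j \<notin> {1..N} \<Longrightarrow> \<pi> j = j" using assms(1) by (simp add: permutes_not_in)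
  ultimately show ?thesis using assms(2) unfolding Lambda_def by auto
qed

lemma transpose_permutes: "a \<in> S \<Longrightarrow> b \<in> S \<Longrightarrow> transpose a b permutes S"
  by (simp add: permutes_swap_id swap_id_eq)

lemma act_transpose: "act (transpose a b) \<mu> = \<mu> \<circ> transpose a b"
  by (simp add: act_def fun_eq_iff)

lemma act_inv: "bij w \<Longrightarrow> act (inv w) \<mu> = \<mu> \<circ> w"
  by (simp add: act_def fun_eq_iff inv_inv_eq)

lemma act_id[simp]: "act id \<mu> = \<mu>" "act (inv id) \<mu> = \<mu>"
  by (simp_all add: act_def)

lemma psum_0[simp]: "psum 0 \<mu> = 0" by (simp add: psum_def)

lemma psum_Suc: "psum (Suc j) \<mu> = psum j \<mu> + \<mu> (Suc j)"
  by (simp add: psum_def)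

lemma psum_inj_Lambda:
  assumes "\<mu> \<in> Lambda N n" "\<kappa> \<in> Lambda N n" "\<forall>j\<in>{1..N}. psum j \<mu> = psum j \<kappa>"
  shows "\<mu> = \<kappa>"
proof
  fix j
  show "\<mu> j = \<kappa> j"
  proof (cases "j \<in> {1..N}")
    case True
    then obtain j' where j': "j = Suc j'" by (cases j) auto
    have "psum j \<mu> = psum j \<kappa>" using assms(3) True by blast
    moreover have "psum j' \<mu> = psum j' \<kappa>"
      using assms(3) True j' by (cases j') auto
    ultimately show ?thesis using j' by (simp add: psum_Suc)
  next
    case False
    then show ?thesis using Lambda_outside assms(1,2) by metis
  qed
qed

lemma dom_ge_refl: "dom_ge N \<mu> \<mu>" by (simp add: dom_ge_def)

lemma dom_ge_trans: "dom_ge N \<mu> \<kappa> \<Longrightarrow> dom_ge N \<kappa> \<nu> \<Longrightarrow> dom_ge N \<mu> \<nu>"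
  by (auto simp: dom_ge_def intro: order_trans)

lemma dom_ge_antisym:
  "\<mu> \<in> Lambda N n \<Longrightarrow> \<kappa> \<in> Lambda N n \<Longrightarrow> dom_ge N \<mu> \<kappa> \<Longrightarrow> dom_ge N \<kappa> \<mu> \<Longrightarrow> \<mu> = \<kappa>"
  by (rule psum_inj_Lambda) (auto simp: dom_ge_iff_psum intro: order_antisym)

lemma sum_01_eq_card:
  assumes "finite A" "\<And>a. a \<in> A \<Longrightarrow> \<mu> a \<le> (1::nat)"
  shows "sum \<mu> A = card {a\<in>A. 0 < \<mu> a}"
proof -
  have "sum \<mu> A = sum \<mu> {a\<in>A. 0 < \<mu> a}"
    by (rule sum.mono_neutral_right) (use assms in auto)
  also have "\<dots> = sum (\<lambda>_. 1) {a\<in>A. 0 < \<mu> a}"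
  proof (rule sum.cong)
    fix x assume "x \<in> {a\<in>A. 0 < \<mu> a}"
    then have "\<mu> x \<le> 1" "0 < \<mu> x" using assms(2) by auto
    then show "\<mu> x = 1" by linarith
  qed simp
  finally show ?thesis by simp
qed

lemma card_inversions_Suc:
  assumes "\<And>a. a \<in> {1..Suc M} \<Longrightarrow> \<mu> a \<le> 1"
  shows "card (inversions (Suc M) \<mu>) = card (inversions M \<mu>) + (if \<mu> (Suc M) = 0 then psum M \<mu> else 0)"
proof -
  define B where "B = (\<lambda>a. (a, Suc M)) ` {a\<in>{1..M}. \<mu> a > \<mu> (Suc M)}"
  have "inversions (Suc M) \<mu> = inversions M \<mu> \<union> B"
    by (auto simp: inversions_def B_def image_iff le_Suc_eq less_Suc_eq_le)
  moreover have "inversions M \<mu> \<inter> B = {}" by (auto simp: inversions_def B_def)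
  ultimately have "card (inversions (Suc M) \<mu>) = card (inversions M \<mu>) + card B"
    by (simp add: card_Un_disjoint B_def)
  moreover have "card B = card {a\<in>{1..M}. \<mu> a > \<mu> (Suc M)}"
    unfolding B_def by (rule card_image) (auto simp: inj_on_def)
  moreover have "psum M \<mu> = card {a\<in>{1..M}. 0 < \<mu> a}"
    unfolding psum_def by (rule sum_01_eq_card) (use assms in auto)
  moreover have "{a\<in>{1..M}. \<mu> a > \<mu> (Suc M)} = {}" if "\<mu> (Suc M) \<noteq> 0"
    using assms that by force
  ultimately show ?thesis by auto
qed

text \<open>The length is an affine function of the sum of the partial sums; hence it is strictly
  monotone for dominance.\<close>
lemma len_psum_total_identity:
  assumes "\<And>a. a \<in> {1..M} \<Longrightarrow> \<mu> a \<le> 1"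
  shows "2 * card (inversions M \<mu>) + psum M \<mu> * (psum M \<mu> + 1) = 2 * psum_total M \<mu>"
  using assms
proof (induction M)
  case 0
  then show ?case by (simp add: inversions_def psum_total_def)
next
  case (Suc M)
  have "\<mu> (Suc M) = 0 \<or> \<mu> (Suc M) = 1" using Suc.prems[of "Suc M"] by auto
  then show ?case
    using Suc card_inversions_Suc[OF Suc.prems]
    by (auto simp: psum_total_def psum_Suc algebra_simps)
qed

lemma len_Lambda_psum_total:
  "\<mu> \<in> Lambda N n \<Longrightarrow> 2 * len N \<mu> + n * (n + 1) = 2 * psum_total N \<mu>"
  using len_psum_total_identity[of N \<mu>] Lambda_le1 Lambda_psum len_eq_card_inversions by metis

lemma len_mono_dom_ge:
  assumes "\<mu> \<in> Lambda N n" "\<kappa> \<in> Lambda N n" "dom_ge N \<mu> \<kappa>"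
  shows "len N \<kappa> \<le> len N \<mu>" and "\<mu> \<noteq> \<kappa> \<Longrightarrow> len N \<kappa> < len N \<mu>"
proof -
  have ge: "\<forall>j\<in>{1..N}. psum j \<kappa> \<le> psum j \<mu>" using assms(3) by (simp add: dom_ge_iff_psum)
  then have "psum_total N \<kappa> \<le> psum_total N \<mu>" unfolding psum_total_def by (intro sum_mono) auto
  then show "len N \<kappa> \<le> len N \<mu>" using len_Lambda_psum_total[OF assms(1)] len_Lambda_psum_total[OF assms(2)] by linarith
  assume ne: "\<mu> \<noteq> \<kappa>"
  then obtain j where j: "j \<in> {1..N}" "psum j \<kappa> \<noteq> psum j \<mu>" using psum_inj_Lambda[OF assms(1,2)] by metis
  have "psum_total N \<kappa> < psum_total N \<mu>" unfolding psum_total_def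
    by (rule sum_strict_mono_ex1) (use ge j le_neq_implies_less in blast)+
  then show "len N \<kappa> < len N \<mu>" using len_Lambda_psum_total[OF assms(1)] len_Lambda_psum_total[OF assms(2)] by linarith
qed

lemma len_le_square: "len N \<mu> \<le> N * N"
proof -
  have "inversions N \<mu> \<subseteq> {1..N} \<times> {1..N}" by (auto simp: inversions_def)
  then have "card (inversions N \<mu>) \<le> card ({1..N} \<times> {1..N})" by (rule card_mono[rotated]) simp
  then show ?thesis by (simp add: len_eq_card_inversions card_cartesian_product)
qed

lemma psum_comp_transpose:
  assumes "1 \<le> a" "a < b"
  shows "if a \<le> j \<and> j < b then psum j (\<mu> \<circ> transpose a b) + \<mu> a = psum j \<mu> + \<mu> b
         else psum j (\<mu> \<circ> transpose a b) = psum j \<mu>"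
proof -
  have r: "psum j (\<mu> \<circ> transpose a b) = sum \<mu> (transpose a b ` {1..j})"
    unfolding psum_def by (subst sum.reindex) auto
  show ?thesis
  proof (cases "a \<le> j \<and> j < b")
    case True
    have "transpose a b ` {1..j} = insert b ({1..j} - {a})"
    proof (intro equalityI subsetI)
      fix x assume "x \<in> transpose a b ` {1..j}"
      then obtain y where "y \<in> {1..j}" "x = transpose a b y" by auto
      then show "x \<in> insert b ({1..j} - {a})" using True assms
        by (cases "y = a"; cases "y = b") auto
    next
      fix x assume x: "x \<in> insert b ({1..j} - {a})"
      show "x \<in> transpose a b ` {1..j}"
      proof (cases "x = b")
        case True
        then show ?thesis using \<open>a \<le> j \<and> j < b\<close> assms by (auto intro!: image_eqI[of _ _ a])
      next
        case False
        then show ?thesis using x True by (auto intro!: image_eqI[of _ _ x])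
      qed
    qed
    moreover have "b \<notin> {1..j} - {a}" using True by auto
    moreover have "sum \<mu> ({1..j} - {a}) + \<mu> a = sum \<mu> {1..j}"
      using True assms sum.remove[of "{1..j}" a \<mu>] by simp
    ultimately show ?thesis using True r by (simp add: psum_def)
  next
    case False
    then have "transpose a b ` {1..j} = {1..j}"
      by (intro transpose_image_eq) (use assms in auto)
    then have "psum j (\<mu> \<circ> transpose a b) = psum j \<mu>" using r by (simp add: psum_def)
    then show ?thesis using False by (simp only: if_False)
  qed
qed

lemma swap_inversion:
  assumes m: "\<mu> \<in> Lambda N n" and ab: "a \<in> {1..N}" "b \<in> {1..N}" "a < b" "\<mu> a > \<mu> b"
  shows "\<mu> \<circ> transpose a b \<in> Lambda N n" "dom_ge N \<mu> (\<mu> \<circ> transpose a b)"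
    "\<mu> \<circ> transpose a b \<noteq> \<mu>"
proof -
  show "\<mu> \<circ> transpose a b \<in> Lambda N n"
    by (rule Lambda_comp_permutes[OF transpose_permutes m]) (use ab in auto)
  have "\<mu> a = 1" "\<mu> b = 0" using ab Lambda_le1[OF m, of a] by auto
  then show "dom_ge N \<mu> (\<mu> \<circ> transpose a b)" unfolding dom_ge_iff_psum
  proof (intro ballI)
    fix j assume "j \<in> {1..N}"
    have a1: "1 \<le> a" using ab by simp
    show "psum j (\<mu> \<circ> transpose a b) \<le> psum j \<mu>"
      using psum_comp_transpose[OF a1 ab(3), of j \<mu>] \<open>\<mu> a = 1\<close> \<open>\<mu> b = 0\<close>
      by (simp split: if_splits)
  qed
  show "\<mu> \<circ> transpose a b \<noteq> \<mu>"
  proof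
    assume "\<mu> \<circ> transpose a b = \<mu>"
    then have "\<mu> (transpose a b a) = \<mu> a" by (metis comp_apply)
    then show False using ab by simp
  qed
qed

lemma len_swap_inversion_less:
  assumes m: "\<mu> \<in> Lambda N n" and ab: "a \<in> {1..N}" "b \<in> {1..N}" "a < b" "\<mu> a > \<mu> b"
  shows "len N (\<mu> \<circ> transpose a b) < len N \<mu>"
  using len_mono_dom_ge(2)[OF m swap_inversion(1,2)[OF assms]] swap_inversion(3)[OF assms] by metis

lemma psum_comp_simple_other:
  assumes "1 \<le> i" "j \<noteq> i"
  shows "psum j (\<mu> \<circ> transpose i (Suc i)) = psum j \<mu>"
proof -
  have "\<not> (i \<le> j \<and> j < Suc i)" using assms(2) by auto
  then show ?thesis using psum_comp_transpose[OF assms(1), of "Suc i" j \<mu>] by simp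
qed

lemma psum_comp_simple_at:
  assumes "1 \<le> i"
  shows "psum i (\<mu> \<circ> transpose i (Suc i)) + \<mu> i = psum i \<mu> + \<mu> (Suc i)"
  using psum_comp_transpose[OF assms(1), of "Suc i" i \<mu>] by simp

lemma psum_pred: "1 \<le> i \<Longrightarrow> psum i \<mu> = psum (i - 1) \<mu> + \<mu> i"
  using psum_Suc[of "i - 1" \<mu>] by simp

lemma psum_pred_mono: "dom_ge N \<nu> \<kappa> \<Longrightarrow> i \<le> N \<Longrightarrow> psum (i - 1) \<kappa> \<le> psum (i - 1) \<nu>"
proof (cases "i - 1 = 0")
  case False
  assume "dom_ge N \<nu> \<kappa>" "i \<le> N"
  moreover have "i - 1 \<in> {1..N}" using False \<open>i \<le> N\<close> by auto
  ultimately show ?thesis unfolding dom_ge_iff_psum by blast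
qed simp

lemma dom_ge_comp_simple_both:
  assumes \<nu>: "\<nu> \<in> Lambda N n" and \<kappa>: "\<kappa> \<in> Lambda N n" and i: "1 \<le> i" "Suc i \<le> N"
    and k0: "\<kappa> (Suc i) = 0" and ge: "dom_ge N \<nu> \<kappa>"
  shows "dom_ge N (\<nu> \<circ> transpose i (Suc i)) (\<kappa> \<circ> transpose i (Suc i))"
  unfolding dom_ge_iff_psum
proof (intro ballI)
  fix j assume j: "j \<in> {1..N}"
  show "psum j (\<kappa> \<circ> transpose i (Suc i)) \<le> psum j (\<nu> \<circ> transpose i (Suc i))"
  proof (cases "j = i")
    case False
    then show ?thesis using psum_comp_simple_other[OF i(1) False] ge j by (simp add: dom_ge_iff_psum)
  next
    case True
    have "psum (i - 1) \<kappa> \<le> psum (i - 1) \<nu>" using psum_pred_mono[OF ge] i by simp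
    moreover have "psum i (\<kappa> \<circ> transpose i (Suc i)) = psum (i - 1) \<kappa>"
      using psum_comp_simple_at[OF i(1), of \<kappa>] psum_pred[OF i(1), of \<kappa>] k0 by simp
    moreover have "psum i (\<nu> \<circ> transpose i (Suc i)) = psum (i - 1) \<nu> + \<nu> (Suc i)"
      using psum_comp_simple_at[OF i(1), of \<nu>] psum_pred[OF i(1), of \<nu>] by simp
    ultimately show ?thesis using True by simp
  qed
qed

lemma dom_ge_comp_simple_left:
  assumes \<nu>: "\<nu> \<in> Lambda N n" and \<kappa>: "\<kappa> \<in> Lambda N n" and i: "1 \<le> i" "Suc i \<le> N"
    and nk: "\<not> (\<kappa> i = 1 \<and> \<kappa> (Suc i) = 0)" and ge: "dom_ge N \<nu> \<kappa>"
  shows "dom_ge N (\<nu> \<circ> transpose i (Suc i)) \<kappa>"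
  unfolding dom_ge_iff_psum
proof (intro ballI)
  fix j assume j: "j \<in> {1..N}"
  show "psum j \<kappa> \<le> psum j (\<nu> \<circ> transpose i (Suc i))"
  proof (cases "j = i")
    case False
    then show ?thesis using psum_comp_simple_other[OF i(1) False] ge j by (simp add: dom_ge_iff_psum)
  next
    case True
    have a: "psum (i - 1) \<kappa> \<le> psum (i - 1) \<nu>" using psum_pred_mono[OF ge] i by simp
    have b: "psum (Suc i) \<kappa> \<le> psum (Suc i) \<nu>" using ge i by (simp add: dom_ge_iff_psum)
    have c: "psum i (\<nu> \<circ> transpose i (Suc i)) = psum (i - 1) \<nu> + \<nu> (Suc i)"
      using psum_comp_simple_at[OF i(1), of \<nu>] psum_pred[OF i(1), of \<nu>] by simp
    have d: "psum i \<kappa> = psum (i - 1) \<kappa> + \<kappa> i" using psum_pred[OF i(1)] .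
    have e: "psum (Suc i) \<kappa> = psum (i - 1) \<kappa> + \<kappa> i + \<kappa> (Suc i)"
      using d psum_Suc[of i \<kappa>] by simp
    have f: "psum (Suc i) \<nu> = psum (i - 1) \<nu> + \<nu> i + \<nu> (Suc i)"
      using psum_pred[OF i(1), of \<nu>] psum_Suc[of i \<nu>] by simp
    have l: "\<nu> i \<le> 1" "\<nu> (Suc i) \<le> 1" "\<kappa> i \<le> 1" "\<kappa> (Suc i) \<le> 1"
      using Lambda_le1 \<nu> \<kappa> by auto
    have "psum (i - 1) \<kappa> + \<kappa> i \<le> psum (i - 1) \<nu> + \<nu> (Suc i)"
    proof (cases "\<kappa> i = 0")
      case True then show ?thesis using a by simp
    next
      case False
      then have "\<kappa> i = 1" "\<kappa> (Suc i) = 1" using nk l by auto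
      then show ?thesis using a b e f l by (cases "\<nu> (Suc i) = 0") auto
    qed
    then show ?thesis using True c d by simp
  qed
qed

lemma descent_swap:
  assumes \<kappa>: "\<kappa> \<in> Lambda N n" and i: "1 \<le> i" "Suc i \<le> N" and k: "\<kappa> i = 1" "\<kappa> (Suc i) = 0"
  shows "dom_ge N \<kappa> (\<kappa> \<circ> transpose i (Suc i))" "\<kappa> \<circ> transpose i (Suc i) \<noteq> \<kappa>"
    "\<kappa> \<circ> transpose i (Suc i) \<in> Lambda N n"
proof -
  show "\<kappa> \<circ> transpose i (Suc i) \<in> Lambda N n"
    by (rule Lambda_comp_permutes[OF transpose_permutes \<kappa>]) (use i in auto)
  show "dom_ge N \<kappa> (\<kappa> \<circ> transpose i (Suc i))" unfolding dom_ge_iff_psum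
  proof (intro ballI)
    fix j assume "j \<in> {1..N}"
    show "psum j (\<kappa> \<circ> transpose i (Suc i)) \<le> psum j \<kappa>"
      using psum_comp_simple_other[OF i(1), of j \<kappa>] psum_comp_simple_at[OF i(1), of \<kappa>] k by (cases "j = i") auto
  qed
  show "\<kappa> \<circ> transpose i (Suc i) \<noteq> \<kappa>"
  proof
    assume "\<kappa> \<circ> transpose i (Suc i) = \<kappa>"
    then have "\<kappa> (transpose i (Suc i) i) = \<kappa> i" by (metis comp_apply)
    then show False using k by simp
  qed
qed

lemma simple_transposition_less:
  assumes "a < b" "(a, b) \<noteq> (i, Suc i)"
  shows "transpose i (Suc i) a < transpose i (Suc i) b"
  using assms by (auto simp: transpose_def)

lemma inversions_descent_eq:
  assumes i: "1 \<le> i" "Suc i \<le> N" and k: "\<kappa> i = 1" "\<kappa> (Suc i) = 0"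
  defines "s \<equiv> transpose i (Suc i)"
  shows "inversions N \<kappa> = insert (i, Suc i) ((\<lambda>(a, b). (s a, s b)) ` inversions N (\<kappa> \<circ> s))"
proof -
  have sN: "\<And>x. x \<in> {1..N} \<Longrightarrow> s x \<in> {1..N}" using i by (auto simp: s_def transpose_def)
  have ss: "\<And>x. s (s x) = x" by (simp add: s_def)
  show "inversions N \<kappa> = insert (i, Suc i) ((\<lambda>(a, b). (s a, s b)) ` inversions N (\<kappa> \<circ> s))"
  proof (intro equalityI subsetI)
    fix x assume x: "x \<in> inversions N \<kappa>"
    obtain a b where ab: "x = (a, b)" by force
    show "x \<in> insert (i, Suc i) ((\<lambda>(a, b). (s a, s b)) ` inversions N (\<kappa> \<circ> s))"
    proof (cases "(a, b) = (i, Suc i)")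
      case True then show ?thesis using ab by simp
    next
      case False
      have m: "a \<in> {1..N}" "b \<in> {1..N}" "a < b" "\<kappa> a > \<kappa> b" using x ab by (auto simp: inversions_def)
      have "(s a, s b) \<in> inversions N (\<kappa> \<circ> s)"
        using m sN simple_transposition_less[OF m(3) False] ss by (auto simp: inversions_def s_def)
      moreover have "x = (\<lambda>(a, b). (s a, s b)) (s a, s b)" using ab ss by simp
      ultimately show ?thesis by blast
    qed
  next
    fix x assume x: "x \<in> insert (i, Suc i) ((\<lambda>(a, b). (s a, s b)) ` inversions N (\<kappa> \<circ> s))"
    show "x \<in> inversions N \<kappa>"
    proof (cases "x = (i, Suc i)")
      case True then show ?thesis using i k by (simp add: inversions_def)
    next
      case False
      then obtain a b where ab: "(a, b) \<in> inversions N (\<kappa> \<circ> s)" "x = (s a, s b)" using x by auto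
      have m: "a \<in> {1..N}" "b \<in> {1..N}" "a < b" "\<kappa> (s a) > \<kappa> (s b)" using ab by (auto simp: inversions_def)
      have ne: "(a, b) \<noteq> (i, Suc i)"
      proof
        assume "(a, b) = (i, Suc i)"
        then have "\<kappa> (s a) = 0" using k by (simp add: s_def)
        then show False using m by simp
      qed
      show ?thesis using ab m sN simple_transposition_less[OF m(3) ne] by (auto simp: inversions_def s_def)
    qed
  qed
qed

lemma inversions_descent:
  assumes i: "1 \<le> i" "Suc i \<le> N" and k: "\<kappa> i = 1" "\<kappa> (Suc i) = 0"
  defines "s \<equiv> transpose i (Suc i)"
  shows "inversions N \<kappa> = insert (i, Suc i) ((\<lambda>(a, b). (s a, s b)) ` inversions N (\<kappa> \<circ> s))"
    "(i, Suc i) \<notin> (\<lambda>(a, b). (s a, s b)) ` inversions N (\<kappa> \<circ> s)"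
    "inj_on (\<lambda>(a, b). (s a, s b)) A"
proof -
  show "inversions N \<kappa> = insert (i, Suc i) ((\<lambda>(a, b). (s a, s b)) ` inversions N (\<kappa> \<circ> s))"
    unfolding s_def by (rule inversions_descent_eq[OF assms(1-4)])
  show "inj_on (\<lambda>(a, b). (s a, s b)) A"
    by (rule inj_onI) (auto simp: s_def transpose_eq_iff)
  show "(i, Suc i) \<notin> (\<lambda>(a, b). (s a, s b)) ` inversions N (\<kappa> \<circ> s)"
  proof
    assume "(i, Suc i) \<in> (\<lambda>(a, b). (s a, s b)) ` inversions N (\<kappa> \<circ> s)"
    then obtain a b where "(a, b) \<in> inversions N (\<kappa> \<circ> s)" "s a = i" "s b = Suc i" by auto
    then have "a = Suc i" "b = i" "a < b" by (auto simp: s_def inversions_def transpose_eq_iff)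
    then show False by simp
  qed
qed

lemma len_descent:
  assumes "1 \<le> i" "Suc i \<le> N" "\<kappa> i = 1" "\<kappa> (Suc i) = 0"
  shows "len N \<kappa> = Suc (len N (\<kappa> \<circ> transpose i (Suc i)))"
proof -
  note I = inversions_descent[OF assms]
  show ?thesis unfolding len_eq_card_inversions I(1)
    using I(2) by (simp add: card_image[OF I(3)])
qed

lemma no_ascent_antimono:
  assumes \<mu>: "\<mu> \<in> Lambda N n" and na: "\<forall>j. 1 \<le> j \<longrightarrow> Suc j \<le> N \<longrightarrow> \<not> (\<mu> j = 0 \<and> \<mu> (Suc j) = 1)"
    and ab: "1 \<le> a" "a \<le> b" "b \<le> N"
  shows "\<mu> b \<le> \<mu> a"
  using ab(2,3)
proof (induction b rule: dec_induct)
  case base then show ?case by simp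
next
  case (step m)
  have "\<mu> (Suc m) \<le> \<mu> m"
  proof (rule ccontr)
    assume "\<not> \<mu> (Suc m) \<le> \<mu> m"
    then have "\<mu> m = 0" "\<mu> (Suc m) = 1" using Lambda_le1[OF \<mu>, of "Suc m"] by auto
    moreover have "1 \<le> m" "Suc m \<le> N" using step ab by auto
    ultimately show False using na by blast
  qed
  then show ?case using step by simp
qed

lemma dom_ge_w_iff: "v permutes {1..N} \<Longrightarrow> dom_ge_w N v \<mu> \<kappa> = dom_ge N (\<mu> \<circ> v) (\<kappa> \<circ> v)"
  by (simp add: dom_ge_w_def act_inv permutes_bij)

lemma inv_w_img:
  assumes v: "v permutes {1..N}"
  shows "inv_w N v \<kappa> = (\<lambda>(x, y). (v x, v y)) ` inversions N (\<kappa> \<circ> v)"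
proof (intro equalityI subsetI)
  fix p assume p: "p \<in> inv_w N v \<kappa>"
  obtain a b where ab: "p = (a, b)" by force
  have m: "a \<in> {1..N}" "b \<in> {1..N}" "inv v a < inv v b" "\<kappa> a > \<kappa> b" using p ab by (auto simp: inv_w_def)
  have iv: "inv v permutes {1..N}" using v by (rule permutes_inv)
  have "(inv v a, inv v b) \<in> inversions N (\<kappa> \<circ> v)"
    using m permutes_in_image[OF iv] permutes_inverses[OF v] by (auto simp: inversions_def)
  moreover have "p = (\<lambda>(x, y). (v x, v y)) (inv v a, inv v b)" using ab permutes_inverses[OF v] by simp
  ultimately show "p \<in> (\<lambda>(x, y). (v x, v y)) ` inversions N (\<kappa> \<circ> v)" by blast
next
  fix p assume "p \<in> (\<lambda>(x, y). (v x, v y)) ` inversions N (\<kappa> \<circ> v)"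
  then obtain x y where xy: "(x, y) \<in> inversions N (\<kappa> \<circ> v)" "p = (v x, v y)" by auto
  then show "p \<in> inv_w N v \<kappa>"
    using permutes_in_image[OF v] permutes_inverses[OF v] by (auto simp: inversions_def inv_w_def)
qed

lemma card_inv_w: "v permutes {1..N} \<Longrightarrow> card (inv_w N v \<kappa>) = len N (\<kappa> \<circ> v)"
  unfolding inv_w_img len_eq_card_inversions
  by (rule card_image) (auto simp: inj_on_def permutes_inj[THEN injD])

lemma finite_inv_w[simp]: "finite (inv_w N v \<kappa>)"
  by (rule finite_subset[of _ "{1..N} \<times> {1..N}"]) (auto simp: inv_w_def)

lemma inv_w_mem: "(a, b) \<in> inv_w N v \<kappa> \<Longrightarrow> a \<in> {1..N} \<and> b \<in> {1..N} \<and> a \<noteq> b \<and> (b, a) \<notin> inv_w N v \<kappa> \<and> \<kappa> a > \<kappa> b"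
  by (auto simp: inv_w_def)

lemma swap_inv_w:
  assumes v: "v permutes {1..N}" and \<mu>: "\<mu> \<in> Lambda N n" and ab: "(a, b) \<in> inv_w N v \<mu>"
  shows "\<mu> \<circ> transpose a b \<in> Lambda N n" "len N (\<mu> \<circ> transpose a b \<circ> v) < len N (\<mu> \<circ> v)"
proof -
  have m: "a \<in> {1..N}" "b \<in> {1..N}" "inv v a < inv v b" "\<mu> a > \<mu> b" using ab by (auto simp: inv_w_def)
  show "\<mu> \<circ> transpose a b \<in> Lambda N n" by (rule Lambda_comp_permutes[OF transpose_permutes \<mu>]) (use m in auto)
  have iv: "inv v permutes {1..N}" using v by (rule permutes_inv)
  have eq: "\<mu> \<circ> transpose a b \<circ> v = (\<mu> \<circ> v) \<circ> transpose (inv v a) (inv v b)"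
    using transpose_comp_eq[OF permutes_bij[OF v], of a b] by (simp add: comp_assoc)
  have "len N ((\<mu> \<circ> v) \<circ> transpose (inv v a) (inv v b)) < len N (\<mu> \<circ> v)"
    by (rule len_swap_inversion_less[OF Lambda_comp_permutes[OF v \<mu>]])
       (use m permutes_in_image[OF iv] permutes_inverses[OF v] in auto)
  then show "len N (\<mu> \<circ> transpose a b \<circ> v) < len N (\<mu> \<circ> v)" using eq by simp
qed

lemma len_mono_dom_ge_w:
  assumes v: "v permutes {1..N}" and \<mu>: "\<mu> \<in> Lambda N n" and \<kappa>: "\<kappa> \<in> Lambda N n"
    and ge: "dom_ge_w N v \<mu> \<kappa>"
  shows "len N (\<kappa> \<circ> v) \<le> len N (\<mu> \<circ> v)" "\<mu> \<noteq> \<kappa> \<Longrightarrow> len N (\<kappa> \<circ> v) < len N (\<mu> \<circ> v)"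
proof -
  have g: "dom_ge N (\<mu> \<circ> v) (\<kappa> \<circ> v)" using ge dom_ge_w_iff[OF v] by simp
  note L = len_mono_dom_ge[OF Lambda_comp_permutes[OF v \<mu>] Lambda_comp_permutes[OF v \<kappa>] g]
  show "len N (\<kappa> \<circ> v) \<le> len N (\<mu> \<circ> v)" by (rule L(1))
  assume "\<mu> \<noteq> \<kappa>"
  have "\<mu> \<circ> v \<noteq> \<kappa> \<circ> v"
  proof
    assume eq: "\<mu> \<circ> v = \<kappa> \<circ> v"
    have "\<mu> = \<kappa>"
    proof
      fix x
      have "x = v (inv v x)" using permutes_inverses(1)[OF v] by simp
      then show "\<mu> x = \<kappa> x" using fun_cong[OF eq, of "inv v x"] by simp
    qed
    then show False using \<open>\<mu> \<noteq> \<kappa>\<close> by simp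
  qed
  then show "len N (\<kappa> \<circ> v) < len N (\<mu> \<circ> v)" by (rule L(2))
qed

definition inv_prod :: "nat \<Rightarrow> (nat \<Rightarrow> nat) \<Rightarrow> (nat \<Rightarrow> nat) \<Rightarrow> mpoly" where
  "inv_prod N v \<kappa> = (\<Prod>(a, b)\<in>inv_w N v \<kappa>. tvar a - tvar b)"

lemma inv_prod_Pring: "inv_prod N v \<kappa> \<in> Pring N"
  unfolding inv_prod_def by (rule Pring_prod) (auto intro!: Pring_diff Pring_tvar dest: inv_w_mem)

lemma inv_prod_neq_0: "inv_prod N v \<kappa> \<noteq> 0"
  unfolding inv_prod_def by (auto dest: inv_w_mem)

lemma inv_prod_homogeneous: "v permutes {1..N} \<Longrightarrow> homogeneous (len N (\<kappa> \<circ> v)) (inv_prod N v \<kappa>)"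
proof -
  assume v: "v permutes {1..N}"
  have "homogeneous (\<Sum>x\<in>inv_w N v \<kappa>. 1) (inv_prod N v \<kappa>)"
    unfolding inv_prod_def
  proof (rule homogeneous_prod[of _ _ N])
    fix x assume "x \<in> inv_w N v \<kappa>"
    then obtain a b where x: "x = (a, b)" "a \<in> {1..N}" "b \<in> {1..N}"
      using inv_w_mem by (cases x) blast
    show "(case x of (a, b) \<Rightarrow> tvar a - tvar b) \<in> Pring N"
      using x by (simp add: Pring_diff Pring_tvar)
    show "homogeneous 1 (case x of (a, b) \<Rightarrow> tvar a - tvar b)"
      using x homogeneous_tdiff[of a N b] by simp
  qed
  then show ?thesis using card_inv_w[OF v] by simp
qed

section \<open>GKM classes and the vanishing lemma\<close>

lemma GKM_outside: "\<alpha> \<in> GKM N n \<Longrightarrow> \<mu> \<notin> Lambda N n \<Longrightarrow> \<alpha> \<mu> = 0"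
  by (simp add: GKM_def)

lemma GKM_Pring: "\<alpha> \<in> GKM N n \<Longrightarrow> \<alpha> \<mu> \<in> Pring N"
  by (cases "\<mu> \<in> Lambda N n") (auto simp: GKM_def)

lemma GKM_dvd: "\<alpha> \<in> GKM N n \<Longrightarrow> \<mu> \<in> Lambda N n \<Longrightarrow> a \<in> {1..N} \<Longrightarrow> b \<in> {1..N} \<Longrightarrow> a \<noteq> b \<Longrightarrow>
    (tvar a - tvar b) dvd (\<alpha> \<mu> - \<alpha> (\<mu> \<circ> transpose a b))"
  by (auto simp: GKM_def act_transpose)

lemma GKMI:
  assumes "\<And>\<mu>. \<mu> \<notin> Lambda N n \<Longrightarrow> \<alpha> \<mu> = 0" "\<And>\<mu>. \<mu> \<in> Lambda N n \<Longrightarrow> \<alpha> \<mu> \<in> Pring N"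
    "\<And>\<mu> a b. \<mu> \<in> Lambda N n \<Longrightarrow> a \<in> {1..N} \<Longrightarrow> b \<in> {1..N} \<Longrightarrow> a \<noteq> b \<Longrightarrow>
       (tvar a - tvar b) dvd (\<alpha> \<mu> - \<alpha> (\<mu> \<circ> transpose a b))"
  shows "\<alpha> \<in> GKM N n"
  using assms by (auto simp: GKM_def act_transpose)

lemma GKM_diff: "\<alpha> \<in> GKM N n \<Longrightarrow> \<beta> \<in> GKM N n \<Longrightarrow> (\<lambda>\<mu>. \<alpha> \<mu> - \<beta> \<mu>) \<in> GKM N n"
proof (rule GKMI)
  fix \<mu> a b assume h: "\<alpha> \<in> GKM N n" "\<beta> \<in> GKM N n" "\<mu> \<in> Lambda N n" "a \<in> {1..N}" "b \<in> {1..N}" "a \<noteq> b"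
  have "(tvar a - tvar b) dvd (\<alpha> \<mu> - \<alpha> (\<mu> \<circ> transpose a b)) - (\<beta> \<mu> - \<beta> (\<mu> \<circ> transpose a b))"
    using GKM_dvd[OF h(1,3-6)] GKM_dvd[OF h(2,3-6)] by (rule dvd_diff)
  then show "(tvar a - tvar b) dvd (\<alpha> \<mu> - \<beta> \<mu>) - (\<alpha> (\<mu> \<circ> transpose a b) - \<beta> (\<mu> \<circ> transpose a b))"
    by (simp add: algebra_simps)
qed (auto simp: GKM_outside intro: Pring_diff GKM_Pring)

lemma GKM_smult: "\<alpha> \<in> GKM N n \<Longrightarrow> q \<in> Pring N \<Longrightarrow> (\<lambda>\<mu>. q * \<alpha> \<mu>) \<in> GKM N n"
proof (rule GKMI)
  fix \<mu> a b assume h: "\<alpha> \<in> GKM N n" "q \<in> Pring N" "\<mu> \<in> Lambda N n" "a \<in> {1..N}" "b \<in> {1..N}" "a \<noteq> b"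
  have "(tvar a - tvar b) dvd q * (\<alpha> \<mu> - \<alpha> (\<mu> \<circ> transpose a b))"
    using GKM_dvd[OF h(1,3-6)] by (rule dvd_mult)
  then show "(tvar a - tvar b) dvd q * \<alpha> \<mu> - q * \<alpha> (\<mu> \<circ> transpose a b)"
    by (simp add: algebra_simps)
qed (auto simp: GKM_outside intro: Pring_mult GKM_Pring)

lemma inv_prod_dvd_GKM:
  assumes \<alpha>: "\<alpha> \<in> GKM N n" and \<mu>: "\<mu> \<in> Lambda N n"
    and z: "\<And>a b. (a, b) \<in> inv_w N v \<mu> \<Longrightarrow> \<alpha> (\<mu> \<circ> transpose a b) = 0"
  shows "inv_prod N v \<mu> dvd \<alpha> \<mu>"
  unfolding inv_prod_def
proof (rule prod_tdiff_dvd)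
  fix a b assume ab: "(a, b) \<in> inv_w N v \<mu>"
  then show "a \<noteq> b" "(b, a) \<notin> inv_w N v \<mu>" by (auto dest: inv_w_mem)
  show "(tvar a - tvar b) dvd \<alpha> \<mu>"
    using GKM_dvd[OF \<alpha> \<mu>, of a b] inv_w_mem[OF ab] z[OF ab] by simp
qed simp

text \<open>At a point of minimal \<open>len\<close> in the support, every swap \<open>\<mu> \<circ> (a b)\<close> along an
  inversion lies off the support, so the GKM condition makes each factor of \<open>inv_prod\<close> divide
  \<open>\<alpha> \<mu>\<close>.\<close>
lemma inv_prod_dvd_GKM_len_minimal:
  assumes v: "v permutes {1..N}" and \<alpha>: "\<alpha> \<in> GKM N n" and \<mu>: "\<mu> \<in> Lambda N n"
    and min: "\<And>\<kappa>. \<kappa> \<in> Lambda N n \<Longrightarrow> \<alpha> \<kappa> \<noteq> 0 \<Longrightarrow> len N (\<mu> \<circ> v) \<le> len N (\<kappa> \<circ> v)"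
  shows "inv_prod N v \<mu> dvd \<alpha> \<mu>"
proof (rule inv_prod_dvd_GKM[OF \<alpha> \<mu>])
  fix a b assume "(a, b) \<in> inv_w N v \<mu>"
  then show "\<alpha> (\<mu> \<circ> transpose a b) = 0"
    using swap_inv_w[OF v \<mu>] min by force
qed

lemma GKM_vanishing:
  assumes v: "v permutes {1..N}" and \<alpha>: "\<alpha> \<in> GKM N n"
    and h: "\<And>\<mu>. \<mu> \<in> Lambda N n \<Longrightarrow> homogeneous d (\<alpha> \<mu>)"
    and l: "\<And>\<mu>. \<mu> \<in> Lambda N n \<Longrightarrow> \<alpha> \<mu> \<noteq> 0 \<Longrightarrow> d < len N (\<mu> \<circ> v)"
  shows "\<alpha> \<mu> = 0"
proof (rule ccontr)
  assume ne: "\<alpha> \<mu> \<noteq> 0"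
  then have "\<mu> \<in> Lambda N n" using GKM_outside[OF \<alpha>] by blast
  then obtain \<mu>0 where m0: "\<mu>0 \<in> Lambda N n" "\<alpha> \<mu>0 \<noteq> 0"
    and min: "\<And>\<kappa>. \<kappa> \<in> Lambda N n \<Longrightarrow> \<alpha> \<kappa> \<noteq> 0 \<Longrightarrow> len N (\<mu>0 \<circ> v) \<le> len N (\<kappa> \<circ> v)"
    using ex_has_least_nat[of "\<lambda>\<kappa>. \<kappa> \<in> Lambda N n \<and> \<alpha> \<kappa> \<noteq> 0" \<mu> "\<lambda>\<kappa>. len N (\<kappa> \<circ> v)"] ne by blast
  have "len N (\<mu>0 \<circ> v) \<le> d"
    using homogeneous_dvd_degree_le[OF GKM_Pring[OF \<alpha>] m0(2) h[OF m0(1)] inv_prod_Pring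
        inv_prod_homogeneous[OF v] inv_prod_dvd_GKM_len_minimal[OF v \<alpha> m0(1) min]] .
  then show False using l m0 by force
qed

lemma is_twisted_schubert_Lambda: "is_twisted_schubert N n v \<theta> \<alpha> \<Longrightarrow> \<theta> \<in> Lambda N n"
  by (auto simp: is_twisted_schubert_def GKM_def)

lemma is_twisted_schubert_GKM: "is_twisted_schubert N n v \<theta> \<alpha> \<Longrightarrow> \<alpha> \<in> GKM N n"
  by (simp add: is_twisted_schubert_def)

lemma is_twisted_schubert_support:
  "is_twisted_schubert N n v \<theta> \<alpha> \<Longrightarrow> \<mu> \<in> Lambda N n \<Longrightarrow> \<alpha> \<mu> \<noteq> 0 \<Longrightarrow> dom_ge_w N v \<mu> \<theta>"
  by (simp add: is_twisted_schubert_def)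

lemma is_twisted_schubert_diagonal: "is_twisted_schubert N n v \<theta> \<alpha> \<Longrightarrow> \<alpha> \<theta> = inv_prod N v \<theta>"
  by (simp add: is_twisted_schubert_def inv_prod_def)

lemma is_twisted_schubert_homogeneous:
  assumes v: "v permutes {1..N}" and A: "is_twisted_schubert N n v \<theta> \<alpha>" and \<mu>: "\<mu> \<in> Lambda N n"
  shows "homogeneous (len N (\<theta> \<circ> v)) (\<alpha> \<mu>)"
proof (cases "\<alpha> \<mu> = 0")
  case False
  then show ?thesis
    using A is_twisted_schubert_support[OF A \<mu>] \<mu>
    by (auto simp: is_twisted_schubert_def act_inv permutes_bij[OF v])
qed simp

text \<open>Uniqueness: the difference of two such classes is homogeneous of degree \<open>len\<close> of
  \<open>\<theta>\<close> but supported strictly above \<open>\<theta>\<close>, where \<open>len\<close> is larger.\<close>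
lemma is_twisted_schubert_unique:
  assumes v: "v permutes {1..N}"
    and A: "is_twisted_schubert N n v \<theta> \<alpha>" and B: "is_twisted_schubert N n v \<theta> \<beta>"
  shows "\<alpha> = \<beta>"
proof
  fix \<mu>
  have \<theta>: "\<theta> \<in> Lambda N n" using is_twisted_schubert_Lambda[OF A] .
  note \<alpha> = is_twisted_schubert_GKM[OF A] and \<beta> = is_twisted_schubert_GKM[OF B]
  have "(\<lambda>\<kappa>. \<alpha> \<kappa> - \<beta> \<kappa>) \<mu> = 0"
  proof (rule GKM_vanishing[OF v GKM_diff[OF \<alpha> \<beta>]])
    fix \<kappa> assume \<kappa>: "\<kappa> \<in> Lambda N n"
    show "homogeneous (len N (\<theta> \<circ> v)) (\<alpha> \<kappa> - \<beta> \<kappa>)"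
      using is_twisted_schubert_homogeneous[OF v _ \<kappa>] A B GKM_Pring \<alpha> \<beta>
      by (intro homogeneous_diff[of _ N]) auto
    assume nz: "\<alpha> \<kappa> - \<beta> \<kappa> \<noteq> 0"
    then have "\<kappa> \<noteq> \<theta>" using A B by (auto simp: is_twisted_schubert_diagonal)
    moreover have "dom_ge_w N v \<kappa> \<theta>"
      using nz is_twisted_schubert_support[OF A \<kappa>] is_twisted_schubert_support[OF B \<kappa>] by fastforce
    ultimately show "len N (\<theta> \<circ> v) < len N (\<kappa> \<circ> v)" using len_mono_dom_ge_w(2)[OF v \<kappa> \<theta>] by blast
  qed
  then show "\<alpha> \<mu> = \<beta> \<mu>" by simp
qed

lemma twisted_schubert_eqI:
  assumes v: "v permutes {1..N}" and A: "is_twisted_schubert N n v \<theta> \<alpha>"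
  shows "twisted_schubert N n v \<theta> = \<alpha>"
  unfolding twisted_schubert_def
  using is_twisted_schubert_unique[OF v _ A] A by (intro the_equality) blast+

lemma inv_w_id: "inv_w N id \<kappa> = inversions N \<kappa>"
  by (simp add: inv_w_def inversions_def)

lemma dom_ge_w_id: "dom_ge_w N id \<mu> \<kappa> = dom_ge N \<mu> \<kappa>"
  by (simp add: dom_ge_w_def)

lemma id_permutes: "id permutes {1..N}" by (simp add: permutes_id)

section \<open>Divided differences\<close>

text \<open>The quotient exists when \<open>\<alpha>\<close> is a GKM class (\<open>div_diff_spec\<close>); otherwise the \<open>SOME\<close> is junk.\<close>

definition div_diff :: "nat \<Rightarrow> nat \<Rightarrow> nat \<Rightarrow> ((nat \<Rightarrow> nat) \<Rightarrow> mpoly) \<Rightarrow> (nat \<Rightarrow> nat) \<Rightarrow> mpoly" where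
  "div_diff N n i \<alpha> \<mu> = (if \<mu> \<in> Lambda N n then
     (SOME q. \<alpha> \<mu> - rename_vars (transpose i (Suc i)) (\<alpha> (\<mu> \<circ> transpose i (Suc i))) = (tvar i - tvar (Suc i)) * q)
     else 0)"

lemma rename_vars_transpose_involutive: "rename_vars (transpose a b) (rename_vars (transpose a b) p) = p"
  by (simp add: rename_vars_rename_vars)

lemma simple_transposition_image: "1 \<le> i \<Longrightarrow> Suc i \<le> N \<Longrightarrow> transpose i (Suc i) ` {1..N} \<subseteq> {1..N}"
  by (auto simp: transpose_def)

lemma simple_transposition_0: "1 \<le> i \<Longrightarrow> transpose i (Suc i) 0 = 0"
  by (simp add: transpose_def)

lemma comp_transpose_involutive[simp]: "\<mu> \<circ> transpose a b \<circ> transpose a b = \<mu>"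
  by (simp add: comp_assoc)

locale simple_transposition =
  fixes N n i :: nat
  assumes i1: "1 \<le> i" and iN: "Suc i \<le> N"
begin

abbreviation "s \<equiv> transpose i (Suc i)"
abbreviation "L \<equiv> tvar i - tvar (Suc i)"

lemma s_permutes: "s permutes {1..N}"
  using i1 iN by (intro transpose_permutes) auto

lemma L_neq_0: "L \<noteq> 0" by simp

lemma L_Pring: "L \<in> Pring N" using i1 iN by (intro Pring_diff Pring_tvar) auto

lemma L_homogeneous: "homogeneous 1 L" using i1 iN homogeneous_tdiff[of i N "Suc i"] by simp

lemma rename_vars_s_L: "rename_vars s L = - L" by (simp add: rename_vars_diff)

lemma div_diff_spec:
  assumes \<alpha>: "\<alpha> \<in> GKM N n" and \<mu>: "\<mu> \<in> Lambda N n"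
  shows "\<alpha> \<mu> - rename_vars s (\<alpha> (\<mu> \<circ> s)) = L * div_diff N n i \<alpha> \<mu>"
proof -
  have d1: "L dvd \<alpha> \<mu> - \<alpha> (\<mu> \<circ> s)" using GKM_dvd[OF \<alpha> \<mu>, of i "Suc i"] i1 iN by simp
  have d2: "L dvd \<alpha> (\<mu> \<circ> s) - rename_vars s (\<alpha> (\<mu> \<circ> s))" by (rule tdiff_dvd_sub_rename_transpose)
  have "L dvd \<alpha> \<mu> - rename_vars s (\<alpha> (\<mu> \<circ> s))" using dvd_add[OF d1 d2] by simp
  then have ex: "\<exists>q. \<alpha> \<mu> - rename_vars s (\<alpha> (\<mu> \<circ> s)) = L * q" by (auto simp: dvd_def)
  show ?thesis unfolding div_diff_def using someI_ex[OF ex] \<mu> by simp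
qed

lemma div_diff_outside: "\<mu> \<notin> Lambda N n \<Longrightarrow> div_diff N n i \<alpha> \<mu> = 0"
  by (simp add: div_diff_def)

lemma div_diff_comp_s:
  assumes \<alpha>: "\<alpha> \<in> GKM N n" and \<mu>: "\<mu> \<in> Lambda N n"
  shows "div_diff N n i \<alpha> (\<mu> \<circ> s) = rename_vars s (div_diff N n i \<alpha> \<mu>)"
proof -
  have \<mu>s: "\<mu> \<circ> s \<in> Lambda N n" by (rule Lambda_comp_permutes[OF s_permutes \<mu>])
  have "L * div_diff N n i \<alpha> (\<mu> \<circ> s) = \<alpha> (\<mu> \<circ> s) - rename_vars s (\<alpha> \<mu>)"
    using div_diff_spec[OF \<alpha> \<mu>s] by simp
  also have "\<dots> = - rename_vars s (\<alpha> \<mu> - rename_vars s (\<alpha> (\<mu> \<circ> s)))"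
    by (simp add: rename_vars_diff rename_vars_transpose_involutive)
  also have "\<dots> = - rename_vars s (L * div_diff N n i \<alpha> \<mu>)" using div_diff_spec[OF \<alpha> \<mu>] by simp
  also have "\<dots> = L * rename_vars s (div_diff N n i \<alpha> \<mu>)" unfolding rename_vars_mult rename_vars_s_L by (simp add: algebra_simps)
  finally show ?thesis by simp
qed

lemma div_diff_Pring:
  assumes \<alpha>: "\<alpha> \<in> GKM N n"
  shows "div_diff N n i \<alpha> \<mu> \<in> Pring N"
proof (cases "\<mu> \<in> Lambda N n")
  case True
  have "\<alpha> \<mu> - rename_vars s (\<alpha> (\<mu> \<circ> s)) \<in> Pring N"
    by (intro Pring_diff Pring_rename_vars GKM_Pring[OF \<alpha>] simple_transposition_image i1 iN)
  then show ?thesis using Pring_quotient[OF _ L_Pring L_neq_0 div_diff_spec[OF \<alpha> True]] by simp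
qed (simp add: div_diff_outside)

lemma dvd_L_sym:
  assumes "(a = i \<and> b = Suc i) \<or> (a = Suc i \<and> b = i)" "L dvd x"
  shows "(tvar a - tvar b) dvd x"
  using assms(1)
proof (elim disjE)
  assume "a = Suc i \<and> b = i"
  then have "tvar a - tvar b = - L" by simp
  then show ?thesis using assms(2) by (metis minus_dvd_iff)
qed (use assms(2) in simp)

lemma div_diff_GKM:
  assumes \<alpha>: "\<alpha> \<in> GKM N n"
  shows "div_diff N n i \<alpha> \<in> GKM N n"
proof (rule GKMI)
  show "\<And>\<mu>. \<mu> \<notin> Lambda N n \<Longrightarrow> div_diff N n i \<alpha> \<mu> = 0" by (rule div_diff_outside)
  show "\<And>\<mu>. \<mu> \<in> Lambda N n \<Longrightarrow> div_diff N n i \<alpha> \<mu> \<in> Pring N" using div_diff_Pring[OF \<alpha>] by blast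
  fix \<mu> a b assume \<mu>: "\<mu> \<in> Lambda N n" and ab: "a \<in> {1..N}" "b \<in> {1..N}" "a \<noteq> b"
  show "(tvar a - tvar b) dvd div_diff N n i \<alpha> \<mu> - div_diff N n i \<alpha> (\<mu> \<circ> transpose a b)"
  proof (cases "(a = i \<and> b = Suc i) \<or> (a = Suc i \<and> b = i)")
    case True
    then have t: "transpose a b = s" by (auto simp: transpose_commute)
    have "L dvd div_diff N n i \<alpha> \<mu> - rename_vars s (div_diff N n i \<alpha> \<mu>)" by (rule tdiff_dvd_sub_rename_transpose)
    then show ?thesis using dvd_L_sym[OF True] t div_diff_comp_s[OF \<alpha> \<mu>] by simp
  next
    case False
    define \<mu>' where "\<mu>' = \<mu> \<circ> transpose a b"
    have \<mu>'L: "\<mu>' \<in> Lambda N n" unfolding \<mu>'_def by (rule Lambda_comp_permutes[OF transpose_permutes \<mu>]) (use ab in auto)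
    have \<mu>s: "\<mu> \<circ> s \<in> Lambda N n" by (rule Lambda_comp_permutes[OF s_permutes \<mu>])
    have comm: "\<mu>' \<circ> s = (\<mu> \<circ> s) \<circ> transpose (s a) (s b)"
      using transpose_comp_eq[of s a b] by (simp add: \<mu>'_def comp_assoc)
    have sab: "s a \<in> {1..N}" "s b \<in> {1..N}" "s a \<noteq> s b"
      using ab simple_transposition_image[OF i1 iN] by (auto simp: transpose_eq_iff image_subset_iff)
    have g1: "(tvar a - tvar b) dvd \<alpha> \<mu> - \<alpha> \<mu>'" using GKM_dvd[OF \<alpha> \<mu> ab] by (simp add: \<mu>'_def)
    have "(tvar (s a) - tvar (s b)) dvd \<alpha> (\<mu> \<circ> s) - \<alpha> (\<mu>' \<circ> s)"
      using GKM_dvd[OF \<alpha> \<mu>s sab] comm by simp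
    then have "rename_vars s (tvar (s a) - tvar (s b)) dvd rename_vars s (\<alpha> (\<mu> \<circ> s) - \<alpha> (\<mu>' \<circ> s))" by (rule rename_vars_dvd)
    then have g2: "(tvar a - tvar b) dvd rename_vars s (\<alpha> (\<mu> \<circ> s)) - rename_vars s (\<alpha> (\<mu>' \<circ> s))"
      by (simp add: rename_vars_diff)
    have "L * (div_diff N n i \<alpha> \<mu> - div_diff N n i \<alpha> \<mu>') =
        (\<alpha> \<mu> - \<alpha> \<mu>') - (rename_vars s (\<alpha> (\<mu> \<circ> s)) - rename_vars s (\<alpha> (\<mu>' \<circ> s)))"
      unfolding right_diff_distrib div_diff_spec[OF \<alpha> \<mu>, symmetric] div_diff_spec[OF \<alpha> \<mu>'L, symmetric]
      by (simp add: algebra_simps)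
    then have "(tvar a - tvar b) dvd L * (div_diff N n i \<alpha> \<mu> - div_diff N n i \<alpha> \<mu>')"
      using dvd_diff[OF g1 g2] by simp
    moreover have "\<not> (tvar a - tvar b) dvd L"
      by (rule tdiff_not_dvd_tdiff) (use ab False in auto)
    ultimately show ?thesis using tdiff_dvd_multD \<mu>'_def by blast
  qed
qed

lemma div_diff_neq_0D:
  assumes \<alpha>: "\<alpha> \<in> GKM N n" and nz: "div_diff N n i \<alpha> \<mu> \<noteq> 0"
  shows "\<mu> \<in> Lambda N n \<and> (\<alpha> \<mu> \<noteq> 0 \<or> \<alpha> (\<mu> \<circ> s) \<noteq> 0)"
proof -
  have \<mu>: "\<mu> \<in> Lambda N n" using nz div_diff_outside by blast
  show ?thesis
  proof (rule ccontr)
    assume "\<not> ?thesis"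
    then have "L * div_diff N n i \<alpha> \<mu> = 0" using div_diff_spec[OF \<alpha> \<mu>] \<mu> by simp
    then show False using nz by simp
  qed
qed

lemma div_diff_homogeneous:
  assumes \<alpha>: "\<alpha> \<in> GKM N n" and \<mu>: "\<mu> \<in> Lambda N n"
    and h1: "homogeneous d (\<alpha> \<mu>)" and h2: "homogeneous d (\<alpha> (\<mu> \<circ> s))"
  shows "homogeneous (d - 1) (div_diff N n i \<alpha> \<mu>) \<and> (d = 0 \<longrightarrow> div_diff N n i \<alpha> \<mu> = 0)"
proof (rule homogeneous_quotient_linear[OF L_Pring L_neq_0 L_homogeneous _ _ div_diff_spec[OF \<alpha> \<mu>]])
  show "\<alpha> \<mu> - rename_vars s (\<alpha> (\<mu> \<circ> s)) \<in> Pring N"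
    by (intro Pring_diff Pring_rename_vars GKM_Pring[OF \<alpha>] simple_transposition_image i1 iN)
  have p1: "\<alpha> (\<mu> \<circ> s) \<in> Pring N" by (rule GKM_Pring[OF \<alpha>])
  have p2: "rename_vars s (\<alpha> (\<mu> \<circ> s)) \<in> Pring N" by (rule Pring_rename_vars[OF p1 simple_transposition_image[OF i1 iN]])
  have h3: "homogeneous d (rename_vars s (\<alpha> (\<mu> \<circ> s)))" by (rule homogeneous_rename_vars[OF p1 h2 simple_transposition_0[OF i1] simple_transposition_image[OF i1 iN]])
  show "homogeneous d (\<alpha> \<mu> - rename_vars s (\<alpha> (\<mu> \<circ> s)))"
    by (rule homogeneous_diff[OF GKM_Pring[OF \<alpha>] p2 h1 h3])
qed

lemma rename_vars_s_prod_inversions: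
  assumes k: "\<kappa> i = 1" "\<kappa> (Suc i) = 0"
  shows "rename_vars s (\<Prod>(a, b)\<in>inversions N \<kappa>. tvar a - tvar b) = - L * (\<Prod>(a, b)\<in>inversions N (\<kappa> \<circ> s). tvar a - tvar b)"
proof -
  note I = inversions_descent[OF i1 iN k]
  have "rename_vars s (\<Prod>(a, b)\<in>inversions N \<kappa>. tvar a - tvar b) = (\<Prod>(a, b)\<in>inversions N \<kappa>. tvar (s a) - tvar (s b))"
    by (simp add: rename_vars_prod case_prod_beta rename_vars_diff)
  also have "\<dots> = (tvar (s i) - tvar (s (Suc i))) *
      (\<Prod>(a, b)\<in>(\<lambda>(a, b). (s a, s b)) ` inversions N (\<kappa> \<circ> s). tvar (s a) - tvar (s b))"
    unfolding I(1) using I(2) by (simp add: prod.insert)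
  also have "(\<Prod>(a, b)\<in>(\<lambda>(a, b). (s a, s b)) ` inversions N (\<kappa> \<circ> s). tvar (s a) - tvar (s b)) =
      (\<Prod>(a, b)\<in>inversions N (\<kappa> \<circ> s). tvar a - tvar b)"
    by (subst prod.reindex[OF I(3)]) (simp add: case_prod_beta)
  finally show ?thesis by simp
qed

lemma div_diff_twisted_schubert_support:
  assumes A: "is_twisted_schubert N n id \<kappa> \<alpha>" and nz: "div_diff N n i \<alpha> \<nu> \<noteq> 0"
  shows "\<nu> \<in> Lambda N n" and "dom_ge N \<nu> \<kappa> \<or> dom_ge N (\<nu> \<circ> s) \<kappa>"
proof -
  note D = div_diff_neq_0D[OF is_twisted_schubert_GKM[OF A] nz]
  show \<nu>: "\<nu> \<in> Lambda N n" using D by blast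
  show "dom_ge N \<nu> \<kappa> \<or> dom_ge N (\<nu> \<circ> s) \<kappa>"
    using D is_twisted_schubert_support[OF A \<nu>] is_twisted_schubert_support[OF A Lambda_comp_permutes[OF s_permutes \<nu>]]
    by (auto simp: dom_ge_w_id)
qed

lemma div_diff_twisted_schubert_homogeneous:
  assumes A: "is_twisted_schubert N n id \<kappa> \<alpha>" and \<nu>: "\<nu> \<in> Lambda N n"
  shows "homogeneous (len N \<kappa> - 1) (div_diff N n i \<alpha> \<nu>)"
    and "len N \<kappa> = 0 \<Longrightarrow> div_diff N n i \<alpha> \<nu> = 0"
  using div_diff_homogeneous[OF is_twisted_schubert_GKM[OF A] \<nu>
      is_twisted_schubert_homogeneous[OF id_permutes A \<nu>]
      is_twisted_schubert_homogeneous[OF id_permutes A Lambda_comp_permutes[OF s_permutes \<nu>]]]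
  by simp_all

lemma div_diff_twisted_schubert_descent:
  assumes \<kappa>: "\<kappa> \<in> Lambda N n" and k: "\<kappa> i = 1" "\<kappa> (Suc i) = 0"
    and A: "is_twisted_schubert N n id \<kappa> \<alpha>"
  shows "is_twisted_schubert N n id (\<kappa> \<circ> s) (div_diff N n i \<alpha>)"
proof -
  note G = descent_swap[OF \<kappa> i1 iN k]
  have \<kappa>s: "\<kappa> \<circ> s \<in> Lambda N n" using G(3) .
  have "\<alpha> (\<kappa> \<circ> s) = 0"
  proof (rule ccontr)
    assume "\<alpha> (\<kappa> \<circ> s) \<noteq> 0"
    then have "dom_ge N (\<kappa> \<circ> s) \<kappa>" using is_twisted_schubert_support[OF A \<kappa>s] dom_ge_w_id by simp
    then show False using dom_ge_antisym[OF \<kappa>s \<kappa> _ G(1)] G(2) by simp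
  qed
  then have "L * div_diff N n i \<alpha> (\<kappa> \<circ> s) = L * (\<Prod>(a, b)\<in>inversions N (\<kappa> \<circ> s). tvar a - tvar b)"
    using div_diff_spec[OF is_twisted_schubert_GKM[OF A] \<kappa>s] is_twisted_schubert_diagonal[OF A]
      rename_vars_s_prod_inversions[OF k]
    by (simp add: inv_prod_def inv_w_id algebra_simps)
  then have val: "div_diff N n i \<alpha> (\<kappa> \<circ> s) = (\<Prod>(a, b)\<in>inv_w N id (\<kappa> \<circ> s). tvar a - tvar b)"
    by (simp add: inv_w_id)
  show ?thesis unfolding is_twisted_schubert_def
  proof (intro conjI ballI impI)
    show "div_diff N n i \<alpha> \<in> GKM N n" by (rule div_diff_GKM[OF is_twisted_schubert_GKM[OF A]])
    show "div_diff N n i \<alpha> (\<kappa> \<circ> s) = (\<Prod>(a, b)\<in>inv_w N id (\<kappa> \<circ> s). tvar a - tvar b)" by (rule val)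
    then show "div_diff N n i \<alpha> (\<kappa> \<circ> s) \<noteq> 0" using inv_prod_neq_0[unfolded inv_prod_def] by simp
    fix \<mu> assume \<mu>: "\<mu> \<in> Lambda N n"
    show "homogeneous (len N (act (inv id) (\<kappa> \<circ> s))) (div_diff N n i \<alpha> \<mu>)"
      using div_diff_twisted_schubert_homogeneous(1)[OF A \<mu>] len_descent[OF i1 iN k] by simp
    assume "div_diff N n i \<alpha> \<mu> \<noteq> 0"
    then have "dom_ge N \<mu> \<kappa> \<or> dom_ge N (\<mu> \<circ> s) \<kappa>" by (rule div_diff_twisted_schubert_support[OF A])
    then show "dom_ge_w N id \<mu> (\<kappa> \<circ> s)"
      using dom_ge_trans[OF _ G(1)] dom_ge_comp_simple_both[OF Lambda_comp_permutes[OF s_permutes \<mu>] \<kappa> i1 iN k(2)]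
      by (auto simp: dom_ge_w_id)
  qed
qed

text \<open>Without a descent at \<open>i\<close>, the divided difference is supported above \<open>\<kappa>\<close> but has
  degree one less than \<open>len N \<kappa>\<close>, so it vanishes.\<close>
lemma div_diff_twisted_schubert_no_descent:
  assumes \<kappa>: "\<kappa> \<in> Lambda N n" and k: "\<not> (\<kappa> i = 1 \<and> \<kappa> (Suc i) = 0)"
    and A: "is_twisted_schubert N n id \<kappa> \<alpha>"
  shows "div_diff N n i \<alpha> \<mu> = 0"
proof (cases "len N \<kappa> = 0")
  case True
  then show ?thesis
    using div_diff_twisted_schubert_homogeneous(2)[OF A] div_diff_twisted_schubert_support(1)[OF A] by blast
next
  case False
  show ?thesis
  proof (rule GKM_vanishing[OF id_permutes div_diff_GKM[OF is_twisted_schubert_GKM[OF A]]])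
    show "\<And>\<nu>. \<nu> \<in> Lambda N n \<Longrightarrow> homogeneous (len N \<kappa> - 1) (div_diff N n i \<alpha> \<nu>)"
      by (rule div_diff_twisted_schubert_homogeneous(1)[OF A])
    fix \<nu> assume nz: "div_diff N n i \<alpha> \<nu> \<noteq> 0"
    note \<nu> = div_diff_twisted_schubert_support(1)[OF A nz]
    have "dom_ge N \<nu> \<kappa>"
      using div_diff_twisted_schubert_support(2)[OF A nz]
        dom_ge_comp_simple_left[OF Lambda_comp_permutes[OF s_permutes \<nu>] \<kappa> i1 iN k]
      by auto
    then show "len N \<kappa> - 1 < len N (\<nu> \<circ> id)" using len_mono_dom_ge(1)[OF \<nu> \<kappa>] False by simp
  qed
qed

end

section \<open>Existence of twisted Schubert classes\<close>

lemma comp_transpose_neq: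
  assumes "\<mu> \<circ> transpose a b \<noteq> \<mu>" shows "\<mu> a \<noteq> \<mu> b"
proof
  assume e: "\<mu> a = \<mu> b"
  have "\<mu> \<circ> transpose a b = \<mu>"
  proof
    fix x show "(\<mu> \<circ> transpose a b) x = \<mu> x" using e by (simp add: transpose_def)
  qed
  then show False using assms by simp
qed

lemma tdiff_dvd_inv_prod_no_ascent:
  assumes \<mu>: "\<mu> \<in> Lambda N n"
    and na: "\<forall>j. 1 \<le> j \<longrightarrow> Suc j \<le> N \<longrightarrow> \<not> (\<mu> j = 0 \<and> \<mu> (Suc j) = 1)"
    and ab: "a \<in> {1..N}" "b \<in> {1..N}" "a < b" and ne: "\<mu> a \<noteq> \<mu> b"
  shows "(tvar a - tvar b) dvd inv_prod N id \<mu>" and "(tvar b - tvar a) dvd inv_prod N id \<mu>"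
proof -
  have "\<mu> b \<le> \<mu> a" using no_ascent_antimono[OF \<mu> na, of a b] ab by auto
  then have "(a, b) \<in> inv_w N id \<mu>" using ne ab by (auto simp: inv_w_id inversions_def)
  then show "(tvar a - tvar b) dvd inv_prod N id \<mu>"
    unfolding inv_prod_def using dvd_prodI[of "inv_w N id \<mu>" "(a, b)" "\<lambda>(a, b). tvar a - tvar b"] by simp
  then show "(tvar b - tvar a) dvd inv_prod N id \<mu>" by (metis minus_diff_eq minus_dvd_iff)
qed

text \<open>Without ascents, \<open>\<mu>\<close> is the top element \<open>1\<dots>10\<dots>0\<close>, so nothing lies strictly above it.\<close>
lemma is_twisted_schubert_id_no_ascent:
  assumes \<mu>: "\<mu> \<in> Lambda N n"
    and na: "\<forall>j. 1 \<le> j \<longrightarrow> Suc j \<le> N \<longrightarrow> \<not> (\<mu> j = 0 \<and> \<mu> (Suc j) = 1)"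
  shows "is_twisted_schubert N n id \<mu> (\<lambda>\<kappa>. if \<kappa> = \<mu> then inv_prod N id \<mu> else 0)"
proof -
  define \<beta> where "\<beta> = (\<lambda>\<kappa>. if \<kappa> = \<mu> then inv_prod N id \<mu> else 0)"
  have key: "(tvar a - tvar b) dvd inv_prod N id \<mu>"
    if "a \<in> {1..N}" "b \<in> {1..N}" "a \<noteq> b" "\<mu> \<circ> transpose a b \<noteq> \<mu>" for a b
    using that comp_transpose_neq[OF that(4)] tdiff_dvd_inv_prod_no_ascent[OF \<mu> na]
    by (cases a b rule: linorder_cases) auto
  have "\<beta> \<in> GKM N n"
  proof (rule GKMI)
    fix \<kappa> a b assume "\<kappa> \<in> Lambda N n" and ab: "a \<in> {1..N}" "b \<in> {1..N}" "a \<noteq> b"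
    have "\<kappa> = \<mu> \<circ> transpose a b" if "\<kappa> \<circ> transpose a b = \<mu>"
      using that by (metis comp_transpose_involutive)
    then show "(tvar a - tvar b) dvd \<beta> \<kappa> - \<beta> (\<kappa> \<circ> transpose a b)"
      using key[OF ab] by (auto simp: \<beta>_def)
  qed (use \<mu> in \<open>auto simp: \<beta>_def inv_prod_Pring\<close>)
  then show ?thesis unfolding \<beta>_def[symmetric] is_twisted_schubert_def
    using inv_prod_homogeneous[OF id_permutes, of N \<mu>]
    by (auto simp: \<beta>_def inv_prod_def dom_ge_w_id dom_ge_refl dest: inv_w_mem)
qed

lemma is_twisted_schubert_id_exists:
  assumes "\<mu> \<in> Lambda N n"
  shows "\<exists>\<alpha>. is_twisted_schubert N n id \<mu> \<alpha>"
  using assms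
proof (induction "N * N - len N \<mu>" arbitrary: \<mu> rule: less_induct)
  case less
  show ?case
  proof (cases "\<exists>j. 1 \<le> j \<and> Suc j \<le> N \<and> \<mu> j = 0 \<and> \<mu> (Suc j) = 1")
    case True
    then obtain j where j: "1 \<le> j" "Suc j \<le> N" "\<mu> j = 0" "\<mu> (Suc j) = 1" by blast
    interpret S: simple_transposition N n j using j by unfold_locales auto
    define \<kappa> where "\<kappa> = \<mu> \<circ> transpose j (Suc j)"
    have \<kappa>: "\<kappa> \<in> Lambda N n" unfolding \<kappa>_def by (rule Lambda_comp_permutes[OF S.s_permutes less.prems])
    have k: "\<kappa> j = 1" "\<kappa> (Suc j) = 0" using j by (auto simp: \<kappa>_def)
    have kback: "\<kappa> \<circ> transpose j (Suc j) = \<mu>" by (simp add: \<kappa>_def)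
    have "len N \<kappa> = Suc (len N \<mu>)" using len_descent[OF j(1,2) k] kback by simp
    moreover have "len N \<kappa> \<le> N * N" by (rule len_le_square)
    ultimately have "N * N - len N \<kappa> < N * N - len N \<mu>" by simp
    then obtain \<alpha> where "is_twisted_schubert N n id \<kappa> \<alpha>" using less.hyps \<kappa> by blast
    then have "is_twisted_schubert N n id (\<kappa> \<circ> transpose j (Suc j)) (div_diff N n j \<alpha>)"
      by (rule S.div_diff_twisted_schubert_descent[OF \<kappa> k])
    then show ?thesis using kback by auto
  next
    case False
    then have "\<forall>j. 1 \<le> j \<longrightarrow> Suc j \<le> N \<longrightarrow> \<not> (\<mu> j = 0 \<and> \<mu> (Suc j) = 1)" by blast
    then show ?thesis using is_twisted_schubert_id_no_ascent[OF less.prems] by blast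
  qed
qed

definition twist_class :: "nat \<Rightarrow> nat \<Rightarrow> (nat \<Rightarrow> nat) \<Rightarrow> ((nat \<Rightarrow> nat) \<Rightarrow> mpoly) \<Rightarrow> (nat \<Rightarrow> nat) \<Rightarrow> mpoly" where
  "twist_class N n v \<beta> \<mu> = (if \<mu> \<in> Lambda N n then rename_vars v (\<beta> (\<mu> \<circ> v)) else 0)"

lemma twist_class_GKM:
  assumes v: "v permutes {1..N}" and \<beta>: "\<beta> \<in> GKM N n"
  shows "twist_class N n v \<beta> \<in> GKM N n"
proof (rule GKMI)
  have vimg: "v ` {1..N} \<subseteq> {1..N}" using permutes_image[OF v] by simp
  have iv: "inv v permutes {1..N}" using v by (rule permutes_inv)
  show "\<And>\<mu>. \<mu> \<notin> Lambda N n \<Longrightarrow> twist_class N n v \<beta> \<mu> = 0" by (simp add: twist_class_def)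
  show "\<And>\<mu>. \<mu> \<in> Lambda N n \<Longrightarrow> twist_class N n v \<beta> \<mu> \<in> Pring N"
    by (simp add: twist_class_def Pring_rename_vars[OF GKM_Pring[OF \<beta>] vimg])
  fix \<mu> a b assume \<mu>: "\<mu> \<in> Lambda N n" and ab: "a \<in> {1..N}" "b \<in> {1..N}" "a \<noteq> b"
  have \<mu>t: "\<mu> \<circ> transpose a b \<in> Lambda N n" by (rule Lambda_comp_permutes[OF transpose_permutes \<mu>]) (use ab in auto)
  have eq: "\<mu> \<circ> transpose a b \<circ> v = (\<mu> \<circ> v) \<circ> transpose (inv v a) (inv v b)"
    using transpose_comp_eq[OF permutes_bij[OF v], of a b] by (simp add: comp_assoc)
  have ab': "inv v a \<in> {1..N}" "inv v b \<in> {1..N}" "inv v a \<noteq> inv v b"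
    using ab permutes_in_image[OF iv] permutes_inverses[OF v] by (auto, metis)
  have "(tvar (inv v a) - tvar (inv v b)) dvd \<beta> (\<mu> \<circ> v) - \<beta> (\<mu> \<circ> transpose a b \<circ> v)"
    using GKM_dvd[OF \<beta> Lambda_comp_permutes[OF v \<mu>] ab'] eq by simp
  then have "rename_vars v (tvar (inv v a) - tvar (inv v b)) dvd rename_vars v (\<beta> (\<mu> \<circ> v) - \<beta> (\<mu> \<circ> transpose a b \<circ> v))"
    by (rule rename_vars_dvd)
  then show "(tvar a - tvar b) dvd twist_class N n v \<beta> \<mu> - twist_class N n v \<beta> (\<mu> \<circ> transpose a b)"
    using \<mu> \<mu>t permutes_inverses(1)[OF v] by (simp add: twist_class_def rename_vars_diff)
qed

lemma rename_vars_prod_inversions: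
  assumes v: "v permutes {1..N}"
  shows "rename_vars v (\<Prod>(a, b)\<in>inversions N (\<theta> \<circ> v). tvar a - tvar b) =
    (\<Prod>(a, b)\<in>inv_w N v \<theta>. tvar a - tvar b)"
proof -
  have "rename_vars v (\<Prod>(a, b)\<in>inversions N (\<theta> \<circ> v). tvar a - tvar b) =
      (\<Prod>(a, b)\<in>inversions N (\<theta> \<circ> v). tvar (v a) - tvar (v b))"
    by (simp add: rename_vars_prod case_prod_beta rename_vars_diff)
  also have "\<dots> = (\<Prod>(a, b)\<in>inv_w N v \<theta>. tvar a - tvar b)"
    unfolding inv_w_img[OF v]
    by (subst prod.reindex) (auto simp: inj_on_def permutes_inj[OF v, THEN injD] case_prod_beta)
  finally show ?thesis .
qed

lemma is_twisted_schubert_twist_class: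
  assumes v: "v permutes {1..N}" and \<theta>: "\<theta> \<in> Lambda N n"
    and B: "is_twisted_schubert N n id (\<theta> \<circ> v) \<beta>"
  shows "is_twisted_schubert N n v \<theta> (twist_class N n v \<beta>)"
proof -
  have \<beta>: "\<beta> \<in> GKM N n" using is_twisted_schubert_GKM[OF B] .
  have val: "twist_class N n v \<beta> \<theta> = (\<Prod>(a, b)\<in>inv_w N v \<theta>. tvar a - tvar b)"
    using is_twisted_schubert_diagonal[OF B] \<theta> rename_vars_prod_inversions[OF v]
    by (simp add: twist_class_def inv_prod_def inv_w_id)
  show ?thesis unfolding is_twisted_schubert_def
  proof (intro conjI ballI impI)
    show "twist_class N n v \<beta> \<in> GKM N n" by (rule twist_class_GKM[OF v \<beta>])
    show "twist_class N n v \<beta> \<theta> = (\<Prod>(a, b)\<in>inv_w N v \<theta>. tvar a - tvar b)" by (rule val)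
    then show "twist_class N n v \<beta> \<theta> \<noteq> 0" using inv_prod_neq_0[unfolded inv_prod_def] by simp
    fix \<mu> assume \<mu>: "\<mu> \<in> Lambda N n"
    have "v ` {1..N} \<subseteq> {1..N}" "v 0 = 0" using permutes_image[OF v] permutes_not_in[OF v] by auto
    then show "homogeneous (len N (act (inv v) \<theta>)) (twist_class N n v \<beta> \<mu>)"
      using homogeneous_rename_vars[OF GKM_Pring[OF \<beta>]
          is_twisted_schubert_homogeneous[OF id_permutes B Lambda_comp_permutes[OF v \<mu>]]] \<mu>
      by (simp add: twist_class_def act_inv permutes_bij[OF v])
    assume "twist_class N n v \<beta> \<mu> \<noteq> 0"
    then have "\<beta> (\<mu> \<circ> v) \<noteq> 0" using \<mu> by (auto simp: twist_class_def)
    then have "dom_ge N (\<mu> \<circ> v) (\<theta> \<circ> v)"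
      using is_twisted_schubert_support[OF B Lambda_comp_permutes[OF v \<mu>]] dom_ge_w_id by simp
    then show "dom_ge_w N v \<mu> \<theta>" using dom_ge_w_iff[OF v] by simp
  qed
qed

lemma twisted_schubert_twist_class:
  assumes v: "v permutes {1..N}" and \<theta>: "\<theta> \<in> Lambda N n"
  shows "is_twisted_schubert N n v \<theta> (twisted_schubert N n v \<theta>)"
    and "twisted_schubert N n v \<theta> = twist_class N n v (twisted_schubert N n id (\<theta> \<circ> v))"
proof -
  obtain \<beta> where B: "is_twisted_schubert N n id (\<theta> \<circ> v) \<beta>"
    using is_twisted_schubert_id_exists[OF Lambda_comp_permutes[OF v \<theta>]] by blast
  have C: "is_twisted_schubert N n v \<theta> (twist_class N n v \<beta>)"
    by (rule is_twisted_schubert_twist_class[OF v \<theta> B])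
  show "is_twisted_schubert N n v \<theta> (twisted_schubert N n v \<theta>)"
    using twisted_schubert_eqI[OF v C] C by simp
  show "twisted_schubert N n v \<theta> = twist_class N n v (twisted_schubert N n id (\<theta> \<circ> v))"
    using twisted_schubert_eqI[OF v C] twisted_schubert_eqI[OF id_permutes B] by simp
qed

lemma twisted_schubert_GKM:
  "v permutes {1..N} \<Longrightarrow> \<theta> \<in> Lambda N n \<Longrightarrow> twisted_schubert N n v \<theta> \<in> GKM N n"
  using is_twisted_schubert_GKM twisted_schubert_twist_class(1) by blast

lemma twisted_schubert_twist:
  assumes "v permutes {1..N}" "\<theta> \<in> Lambda N n" "\<mu> \<in> Lambda N n"
  shows "twisted_schubert N n v \<theta> \<mu> = rename_vars v (twisted_schubert N n id (\<theta> \<circ> v) (\<mu> \<circ> v))"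
  using twisted_schubert_twist_class(2)[OF assms(1,2)] assms(3) by (simp add: twist_class_def)

section \<open>The recursion\<close>

context simple_transposition
begin

lemma div_diff_twisted_schubert_id:
  assumes \<kappa>: "\<kappa> \<in> Lambda N n"
  shows "div_diff N n i (twisted_schubert N n id \<kappa>) \<mu> =
    (if \<kappa> i = 1 \<and> \<kappa> (Suc i) = 0 then twisted_schubert N n id (\<kappa> \<circ> s) \<mu> else 0)"
proof -
  note S = twisted_schubert_twist_class(1)[OF id_permutes \<kappa>]
  show ?thesis
  proof (cases "\<kappa> i = 1 \<and> \<kappa> (Suc i) = 0")
    case True
    then show ?thesis
      using twisted_schubert_eqI[OF id_permutes div_diff_twisted_schubert_descent[OF \<kappa> _ _ S]] by simp
  next
    case False
    show ?thesis
      unfolding if_not_P[OF False] by (rule div_diff_twisted_schubert_no_descent[OF \<kappa> False S])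
  qed
qed

lemma rename_vars_s_twisted_schubert_id:
  assumes \<nu>: "\<nu> \<in> Lambda N n" and x: "x \<in> Lambda N n"
  shows "rename_vars s (twisted_schubert N n id (\<nu> \<circ> s) (x \<circ> s)) =
    twisted_schubert N n id (\<nu> \<circ> s) x - (if \<nu> i < \<nu> (Suc i) then L * twisted_schubert N n id \<nu> x else 0)"
proof -
  have \<kappa>: "\<nu> \<circ> s \<in> Lambda N n" by (rule Lambda_comp_permutes[OF s_permutes \<nu>])
  have "\<nu> i < \<nu> (Suc i) \<longleftrightarrow> (\<nu> \<circ> s) i = 1 \<and> (\<nu> \<circ> s) (Suc i) = 0"
    using Lambda_le1[OF \<nu>, of i] Lambda_le1[OF \<nu>, of "Suc i"] by auto
  then have "div_diff N n i (twisted_schubert N n id (\<nu> \<circ> s)) x =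
      (if \<nu> i < \<nu> (Suc i) then twisted_schubert N n id \<nu> x else 0)"
    using div_diff_twisted_schubert_id[OF \<kappa>] by simp
  moreover have "twisted_schubert N n id (\<nu> \<circ> s) x - rename_vars s (twisted_schubert N n id (\<nu> \<circ> s) (x \<circ> s)) =
      L * div_diff N n i (twisted_schubert N n id (\<nu> \<circ> s)) x"
    by (simp add: div_diff_spec[OF twisted_schubert_GKM[OF id_permutes \<kappa>] x])
  ultimately show ?thesis by (simp add: algebra_simps split: if_splits)
qed

end

lemma twisted_schubert_comp_transpose:
  assumes w: "w permutes {1..N}" and i: "1 \<le> i" "i < N"
    and lam: "lam \<in> Lambda N n" and mu: "mu \<in> Lambda N n"
  shows "twisted_schubert N n (w \<circ> transpose i (Suc i)) lam mu =
    twisted_schubert N n w (act (transpose (w i) (w (Suc i))) lam) mu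
    + (if lam (w i) < lam (w (Suc i))
       then (tvar (w (Suc i)) - tvar (w i)) * twisted_schubert N n w lam mu else 0)"
proof -
  interpret simple_transposition N n i using i by unfold_locales auto
  define \<tau>lam where "\<tau>lam = act (transpose (w i) (w (Suc i))) lam"
  have \<tau>lam_w: "\<tau>lam \<circ> w = lam \<circ> w \<circ> s"
    using transpose_comp_eq[OF permutes_bij[OF w], of "w i" "w (Suc i)"]
    by (simp add: \<tau>lam_def act_transpose comp_assoc permutes_inverses(2)[OF w])
  have \<tau>lam: "\<tau>lam \<in> Lambda N n" unfolding \<tau>lam_def act_transpose
    by (rule Lambda_comp_permutes[OF transpose_permutes lam]) (use i permutes_in_image[OF w] in auto)
  have "twisted_schubert N n (w \<circ> s) lam mu =
      rename_vars w (rename_vars s (twisted_schubert N n id (lam \<circ> w \<circ> s) (mu \<circ> w \<circ> s)))"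
    using twisted_schubert_twist[OF permutes_compose[OF s_permutes w] lam mu]
    by (simp add: comp_assoc rename_vars_rename_vars)
  also have "\<dots> = rename_vars w (twisted_schubert N n id (\<tau>lam \<circ> w) (mu \<circ> w)
      - (if lam (w i) < lam (w (Suc i)) then L * twisted_schubert N n id (lam \<circ> w) (mu \<circ> w) else 0))"
    using rename_vars_s_twisted_schubert_id[OF Lambda_comp_permutes[OF w lam] Lambda_comp_permutes[OF w mu]]
    by (simp add: \<tau>lam_w)
  also have "\<dots> = twisted_schubert N n w \<tau>lam mu
      + (if lam (w i) < lam (w (Suc i))
         then (tvar (w (Suc i)) - tvar (w i)) * twisted_schubert N n w lam mu else 0)"
    using twisted_schubert_twist[OF w \<tau>lam mu] twisted_schubert_twist[OF w lam mu]
    by (simp add: rename_vars_diff rename_vars_mult algebra_simps)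
  finally show ?thesis unfolding \<tau>lam_def .
qed

section \<open>The basis\<close>

definition twisted_schubert_expansion ::
  "nat \<Rightarrow> nat \<Rightarrow> (nat \<Rightarrow> nat) \<Rightarrow> ((nat \<Rightarrow> nat) \<Rightarrow> mpoly) \<Rightarrow> ((nat \<Rightarrow> nat) \<Rightarrow> mpoly) \<Rightarrow> bool" where
  "twisted_schubert_expansion N n v \<alpha> c \<longleftrightarrow>
     (\<forall>\<theta>\<in>Lambda N n. c \<theta> \<in> Pring N) \<and> (\<forall>\<theta>. \<theta> \<notin> Lambda N n \<longrightarrow> c \<theta> = 0)
   \<and> (\<forall>\<mu>. \<alpha> \<mu> = (\<Sum>\<theta>\<in>Lambda N n. c \<theta> * twisted_schubert N n v \<theta> \<mu>))"

definition up_closed :: "nat \<Rightarrow> nat \<Rightarrow> (nat \<Rightarrow> nat) \<Rightarrow> (nat \<Rightarrow> nat) set \<Rightarrow> bool" where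
  "up_closed N n v U \<longleftrightarrow> U \<subseteq> Lambda N n \<and> (\<forall>\<kappa>\<in>U. \<forall>\<kappa>'\<in>Lambda N n. dom_ge_w N v \<kappa>' \<kappa> \<longrightarrow> \<kappa>' \<in> U)"

lemma up_closed_Diff_len_minimal:
  assumes v: "v permutes {1..N}" and U: "up_closed N n v U" and \<mu>: "\<mu> \<in> U"
    and min: "\<And>\<kappa>. \<kappa> \<in> U \<Longrightarrow> len N (\<mu> \<circ> v) \<le> len N (\<kappa> \<circ> v)"
  shows "up_closed N n v (U - {\<mu>})"
  unfolding up_closed_def
proof (intro conjI ballI impI)
  show "U - {\<mu>} \<subseteq> Lambda N n" using U by (auto simp: up_closed_def)
  fix \<kappa> \<kappa>' assume \<kappa>: "\<kappa> \<in> U - {\<mu>}" and \<kappa>': "\<kappa>' \<in> Lambda N n" "dom_ge_w N v \<kappa>' \<kappa>"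
  have "\<kappa>' \<noteq> \<mu>"
  proof
    assume "\<kappa>' = \<mu>"
    then have "len N (\<kappa> \<circ> v) < len N (\<mu> \<circ> v)"
      using len_mono_dom_ge_w(2)[OF v \<kappa>'(1), of \<kappa>] \<kappa> \<kappa>' U by (auto simp: up_closed_def)
    then show False using min \<kappa> by force
  qed
  then show "\<kappa>' \<in> U - {\<mu>}" using U \<kappa> \<kappa>' by (auto simp: up_closed_def)
qed

lemma twisted_schubert_expansion_update:
  assumes c: "twisted_schubert_expansion N n v (\<lambda>\<kappa>. \<alpha> \<kappa> - q * twisted_schubert N n v \<mu> \<kappa>) c"
    and \<mu>: "\<mu> \<in> Lambda N n" and q: "q \<in> Pring N"
  shows "twisted_schubert_expansion N n v \<alpha> (c(\<mu> := c \<mu> + q))"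
  unfolding twisted_schubert_expansion_def
proof (intro conjI allI ballI impI)
  show "\<theta> \<in> Lambda N n \<Longrightarrow> (c(\<mu> := c \<mu> + q)) \<theta> \<in> Pring N" for \<theta>
    using c q by (auto simp: twisted_schubert_expansion_def intro: Pring_add)
  show "\<theta> \<notin> Lambda N n \<Longrightarrow> (c(\<mu> := c \<mu> + q)) \<theta> = 0" for \<theta>
    using c \<mu> by (auto simp: twisted_schubert_expansion_def)
  fix \<kappa>
  have "(\<Sum>\<theta>\<in>Lambda N n. (c(\<mu> := c \<mu> + q)) \<theta> * twisted_schubert N n v \<theta> \<kappa>) =
      (\<Sum>\<theta>\<in>Lambda N n. c \<theta> * twisted_schubert N n v \<theta> \<kappa> +
         (if \<theta> = \<mu> then q * twisted_schubert N n v \<mu> \<kappa> else 0))"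
    by (rule sum.cong) (auto simp: algebra_simps)
  also have "\<dots> = (\<Sum>\<theta>\<in>Lambda N n. c \<theta> * twisted_schubert N n v \<theta> \<kappa>) + q * twisted_schubert N n v \<mu> \<kappa>"
    using \<mu> Lambda_finite by (simp add: sum.distrib)
  also have "(\<Sum>\<theta>\<in>Lambda N n. c \<theta> * twisted_schubert N n v \<theta> \<kappa>) = \<alpha> \<kappa> - q * twisted_schubert N n v \<mu> \<kappa>"
    using c by (simp add: twisted_schubert_expansion_def)
  finally show "\<alpha> \<kappa> = (\<Sum>\<theta>\<in>Lambda N n. (c(\<mu> := c \<mu> + q)) \<theta> * twisted_schubert N n v \<theta> \<kappa>)" by simp
qed

lemma peel_twisted_schubert_support:
  assumes v: "v permutes {1..N}" and U: "up_closed N n v U" and \<mu>U: "\<mu> \<in> U"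
    and supp: "\<forall>\<kappa>. \<alpha> \<kappa> \<noteq> 0 \<longrightarrow> \<kappa> \<in> U" and q: "\<alpha> \<mu> = inv_prod N v \<mu> * q"
    and nz: "\<alpha> \<kappa> - q * twisted_schubert N n v \<mu> \<kappa> \<noteq> 0"
  shows "\<kappa> \<in> U - {\<mu>}"
proof -
  have \<mu>: "\<mu> \<in> Lambda N n" using U \<mu>U by (auto simp: up_closed_def)
  note S = twisted_schubert_twist_class(1)[OF v \<mu>]
  have "\<kappa> \<noteq> \<mu>" using nz q is_twisted_schubert_diagonal[OF S] by (auto simp: mult.commute)
  moreover have "\<kappa> \<in> U"
  proof (cases "\<alpha> \<kappa> = 0")
    case True
    then have Sk: "twisted_schubert N n v \<mu> \<kappa> \<noteq> 0" using nz by auto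
    then have \<kappa>L: "\<kappa> \<in> Lambda N n" using GKM_outside[OF twisted_schubert_GKM[OF v \<mu>]] by blast
    have "dom_ge_w N v \<kappa> \<mu>" by (rule is_twisted_schubert_support[OF S \<kappa>L]) (rule Sk)
    then show ?thesis using U \<mu>U \<kappa>L unfolding up_closed_def by blast
  qed (use supp in blast)
  ultimately show ?thesis by simp
qed

text \<open>Peel off the class at a point of minimal \<open>len\<close> in the support, with the quotient
  \<open>\<alpha> \<mu> / inv_prod N v \<mu>\<close> as coefficient; the support of what is left stays up-closed.\<close>
lemma GKM_expansion_exists_up_closed:
  assumes v: "v permutes {1..N}"
  shows "up_closed N n v U \<Longrightarrow> \<alpha> \<in> GKM N n \<Longrightarrow> (\<forall>\<mu>. \<alpha> \<mu> \<noteq> 0 \<longrightarrow> \<mu> \<in> U) \<Longrightarrow>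
    \<exists>c. twisted_schubert_expansion N n v \<alpha> c"
proof (induction "card U" arbitrary: U \<alpha> rule: less_induct)
  case less
  note U = less.prems(1) and \<alpha> = less.prems(2) and supp = less.prems(3)
  have UL: "U \<subseteq> Lambda N n" using U by (simp add: up_closed_def)
  show ?case
  proof (cases "U = {}")
    case True
    then have "\<alpha> \<mu> = 0" for \<mu> using supp by blast
    then show ?thesis by (intro exI[of _ "\<lambda>_. 0"]) (simp add: twisted_schubert_expansion_def)
  next
    case False
    then obtain \<mu>1 where "\<mu>1 \<in> U" by blast
    then obtain \<mu> where \<mu>U: "\<mu> \<in> U" and min: "\<And>\<kappa>. \<kappa> \<in> U \<Longrightarrow> len N (\<mu> \<circ> v) \<le> len N (\<kappa> \<circ> v)"
      using ex_has_least_nat[of "\<lambda>\<kappa>. \<kappa> \<in> U" \<mu>1 "\<lambda>\<kappa>. len N (\<kappa> \<circ> v)"] by blast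
    have \<mu>: "\<mu> \<in> Lambda N n" using \<mu>U UL by blast
    have "inv_prod N v \<mu> dvd \<alpha> \<mu>"
      by (rule inv_prod_dvd_GKM_len_minimal[OF v \<alpha> \<mu>]) (use min supp in blast)
    then obtain q where q: "\<alpha> \<mu> = inv_prod N v \<mu> * q" by (auto simp: dvd_def)
    have qP: "q \<in> Pring N" by (rule Pring_quotient[OF GKM_Pring[OF \<alpha>] inv_prod_Pring inv_prod_neq_0 q])
    define \<alpha>' where "\<alpha>' = (\<lambda>\<kappa>. \<alpha> \<kappa> - q * twisted_schubert N n v \<mu> \<kappa>)"
    have \<alpha>': "\<alpha>' \<in> GKM N n"
      unfolding \<alpha>'_def by (rule GKM_diff[OF \<alpha> GKM_smult[OF twisted_schubert_GKM[OF v \<mu>] qP]])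
    define U' where "U' = U - {\<mu>}"
    have supp': "\<forall>\<kappa>. \<alpha>' \<kappa> \<noteq> 0 \<longrightarrow> \<kappa> \<in> U'"
      using peel_twisted_schubert_support[OF v U \<mu>U supp q] by (simp add: \<alpha>'_def U'_def)
    have "card U' < card U" unfolding U'_def by (rule card_Diff1_less[OF finite_subset[OF UL Lambda_finite] \<mu>U])
    then obtain c where c: "twisted_schubert_expansion N n v \<alpha>' c"
      using less.hyps[OF _ up_closed_Diff_len_minimal[OF v U \<mu>U min, folded U'_def] \<alpha>' supp'] by blast
    show ?thesis
      using twisted_schubert_expansion_update[OF c[unfolded \<alpha>'_def] \<mu> qP] by blast
  qed
qed

lemma twisted_schubert_neq_0_len_less:
  assumes v: "v permutes {1..N}" and \<theta>: "\<theta> \<in> Lambda N n" and \<mu>: "\<mu> \<in> Lambda N n"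
    and ne: "\<theta> \<noteq> \<mu>" and nz: "twisted_schubert N n v \<theta> \<mu> \<noteq> 0"
  shows "len N (\<theta> \<circ> v) < len N (\<mu> \<circ> v)"
proof -
  have "dom_ge_w N v \<mu> \<theta>"
    by (rule is_twisted_schubert_support[OF twisted_schubert_twist_class(1)[OF v \<theta>] \<mu>]) (rule nz)
  then show ?thesis using len_mono_dom_ge_w(2)[OF v \<mu> \<theta>] ne by blast
qed

text \<open>Unitriangularity: at a point \<open>\<theta>0\<close> of minimal \<open>len\<close> where two expansions differ,
  only the diagonal term survives.\<close>
lemma twisted_schubert_expansion_unique:
  assumes v: "v permutes {1..N}"
    and c: "twisted_schubert_expansion N n v \<alpha> c" and c': "twisted_schubert_expansion N n v \<alpha> c'"
  shows "c = c'"
proof (rule ccontr)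
  assume "c \<noteq> c'"
  then obtain \<theta>1 where "c \<theta>1 \<noteq> c' \<theta>1" by auto
  then obtain \<theta>0 where t0: "c \<theta>0 \<noteq> c' \<theta>0"
    and min: "\<And>\<kappa>. c \<kappa> \<noteq> c' \<kappa> \<Longrightarrow> len N (\<theta>0 \<circ> v) \<le> len N (\<kappa> \<circ> v)"
    using ex_has_least_nat[of "\<lambda>\<kappa>. c \<kappa> \<noteq> c' \<kappa>" \<theta>1 "\<lambda>\<kappa>. len N (\<kappa> \<circ> v)"] by blast
  have \<theta>0: "\<theta>0 \<in> Lambda N n"
    using t0 c c' unfolding twisted_schubert_expansion_def by metis
  have "0 = (\<Sum>\<theta>\<in>Lambda N n. c \<theta> * twisted_schubert N n v \<theta> \<theta>0) -
            (\<Sum>\<theta>\<in>Lambda N n. c' \<theta> * twisted_schubert N n v \<theta> \<theta>0)"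
    using c c' by (simp add: twisted_schubert_expansion_def)
  also have "\<dots> = (\<Sum>\<theta>\<in>Lambda N n. if \<theta> = \<theta>0 then (c \<theta>0 - c' \<theta>0) * inv_prod N v \<theta>0 else 0)"
    unfolding sum_subtractf[symmetric] left_diff_distrib[symmetric]
  proof (rule sum.cong[OF refl])
    fix \<theta> assume \<theta>: "\<theta> \<in> Lambda N n"
    have "c \<theta> = c' \<theta> \<or> twisted_schubert N n v \<theta> \<theta>0 = 0" if "\<theta> \<noteq> \<theta>0"
      using twisted_schubert_neq_0_len_less[OF v \<theta> \<theta>0 that] min[of \<theta>] by fastforce
    then show "(c \<theta> - c' \<theta>) * twisted_schubert N n v \<theta> \<theta>0 =
        (if \<theta> = \<theta>0 then (c \<theta>0 - c' \<theta>0) * inv_prod N v \<theta>0 else 0)"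
      using is_twisted_schubert_diagonal[OF twisted_schubert_twist_class(1)[OF v \<theta>]] by auto
  qed
  also have "\<dots> = (c \<theta>0 - c' \<theta>0) * inv_prod N v \<theta>0" using \<theta>0 Lambda_finite by simp
  finally show False using t0 inv_prod_neq_0 by simp
qed

lemma GKM_twisted_schubert_basis:
  assumes v: "v permutes {1..N}" and \<alpha>: "\<alpha> \<in> GKM N n"
  shows "\<exists>!c. twisted_schubert_expansion N n v \<alpha> c"
proof -
  have "up_closed N n v (Lambda N n)" by (simp add: up_closed_def)
  then obtain c where "twisted_schubert_expansion N n v \<alpha> c"
    using GKM_expansion_exists_up_closed[OF v _ \<alpha>] GKM_outside[OF \<alpha>] by blast
  then show ?thesis using twisted_schubert_expansion_unique[OF v] by blast
qed

theorem proposition3p12: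
  fixes N n i :: nat and w :: "nat \<Rightarrow> nat"
  assumes w: "w permutes {1..N}"
    and i: "1 \<le> i" "i < N"
  shows "(\<forall>lam \<in> Lambda N n. \<forall>mu \<in> Lambda N n.
            twisted_schubert N n (w \<circ> transpose i (i + 1)) lam mu =
              (if lam (w (i + 1)) > lam (w i)
               then twisted_schubert N n w (act (transpose (w i) (w (i + 1))) lam) mu
                    + (tvar (w (i + 1)) - tvar (w i)) * twisted_schubert N n w lam mu
               else twisted_schubert N n w (act (transpose (w i) (w (i + 1))) lam) mu))
       \<and> (\<forall>v. v permutes {1..N} \<longrightarrow>
            (\<forall>lam \<in> Lambda N n. twisted_schubert N n v lam \<in> GKM N n)
          \<and> (\<forall>\<alpha> \<in> GKM N n. \<exists>!c. (\<forall>lam \<in> Lambda N n. c lam \<in> Pring N)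
                 \<and> (\<forall>lam. lam \<notin> Lambda N n \<longrightarrow> c lam = 0)
                 \<and> (\<forall>mu. \<alpha> mu = (\<Sum>lam\<in>Lambda N n. c lam * twisted_schubert N n v lam mu))))"
proof (intro conjI ballI allI impI)
  fix lam mu assume "lam \<in> Lambda N n" "mu \<in> Lambda N n"
  then show "twisted_schubert N n (w \<circ> transpose i (i + 1)) lam mu =
      (if lam (w (i + 1)) > lam (w i)
       then twisted_schubert N n w (act (transpose (w i) (w (i + 1))) lam) mu
            + (tvar (w (i + 1)) - tvar (w i)) * twisted_schubert N n w lam mu
       else twisted_schubert N n w (act (transpose (w i) (w (i + 1))) lam) mu)"
    using twisted_schubert_comp_transpose[OF w i] by simp
qed (rule twisted_schubert_GKM GKM_twisted_schubert_basis[unfolded twisted_schubert_expansion_def];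
      assumption)+

end
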